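(* With probability one there exists $n_0$ such that for every $n\ge n_0$ the function $\mathbb R^3\ni(\alpha',\theta_1',\theta_2')\mapsto Q_n(\mathbf Y_n;\alpha',\theta_1',\theta_2')$ has a unique global minimizer $(\tilde\alpha_n,\tilde\theta_{1,n},\tilde\theta_{2,n})$, given by $$\tilde\alpha_n=\frac{\sum_{k=1,k\notin\{s_1,s_2\}}^n(Y_k-\mu_\varepsilon)Y_{k-1}}{\sum_{k=1,k\notin\{s_1,s_2\}}^nY_{k-1}^2},\qquad \tilde\theta_{i,n}=Y_{s_i}-\tilde\alpha_nY_{s_i-1}-\mu_\varepsilon\ (i=1,2).$$ Moreover, for every $(\alpha,\theta_1,\theta_2)\in(0,1)\times\mathbb N^2$, almost surely $\tilde\alpha_n\to\alpha$ and $\tilde\theta_{i,n}\to Y_{s_i}-\alpha Y_{s_i-1}-\mu_\varepsilon$ for $i=1,2$.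
   Context: INAR(1) with two innovational outliers: Let $\alpha\in(0,1)$. Let $(\varepsilon_k)_{k\in\mathbb N}$ be i.i.d. non-negative integer-valued random variables with $\mathbb E\varepsilon_1^2<\infty$ and $\mathbb P(\varepsilon_1\ne 0)>0$; write $\mu_\varepsilon=\mathbb E\varepsilon_1$ (assumed known). For each $k\in\mathbb N$ let $(\xi_{k,j})_{j\in\mathbb N}$ be i.i.d. Bernoulli random variables with mean $\alpha$, these sequences being mutually independent and independent of $(\varepsilon_k)$. Fix known times $s_1\neq s_2$ in $\mathbb N$ and sizes $\theta_1,\theta_2\in\mathbb N$. Let $Y_0$ be a non-negative integer-valued random variable with $\mathbb E Y_0^2<\infty$, independent of all $\xi_{k,j},\varepsilon_k$, and $Y_k=\sum_{j=1}^{Y_{k-1}}\xi_{k,j}+\varepsilon_k+\delta_{k,s_1}\theta_1+\delta_{k,s_2}\theta_2$, $k\in\mathbb N$. Write $\mathbf Y_n=(Y_0,\dots,Y_n)$. For $n\ge\max(s_1,s_2)$, $$Q_n(\mathbf y_n;\alpha',\theta_1',\theta_2')=\sum_{\substack{k=1\\k\notin\{s_1,s_2\}}}^n(y_k-\alpha'y_{k-1}-\mu_\varepsilon)^2+\sum_{i=1}^2(y_{s_i}-\alpha'y_{s_i-1}-\mu_\varepsilon-\theta_i')^2 .$$ *)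

theory Defs
  imports "HOL-Probability.Probability"
begin

text \<open>Index type for the whole family of primitive random variables:
  the initial value Y0, the innovations eps_k (k >= 1) and the thinning
  Bernoulli variables xi_{k,j} (k, j >= 1).\<close>
datatype inar_idx = IY0 | IEps nat | IXi nat nat

definition inar_index_set :: "inar_idx set" where
  "inar_index_set = {IY0} \<union> {IEps k | k. k \<ge> 1} \<union> {IXi k j | k j. k \<ge> 1 \<and> j \<ge> 1}"

fun inar_family :: "('a \<Rightarrow> nat) \<Rightarrow> (nat \<Rightarrow> 'a \<Rightarrow> nat) \<Rightarrow> (nat \<Rightarrow> nat \<Rightarrow> 'a \<Rightarrow> nat)
    \<Rightarrow> inar_idx \<Rightarrow> 'a \<Rightarrow> nat" where
  "inar_family Y0 eps xi IY0 = Y0"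
| "inar_family Y0 eps xi (IEps k) = eps k"
| "inar_family Y0 eps xi (IXi k j) = xi k j"

fun inar_Y :: "('a \<Rightarrow> nat) \<Rightarrow> (nat \<Rightarrow> 'a \<Rightarrow> nat) \<Rightarrow> (nat \<Rightarrow> nat \<Rightarrow> 'a \<Rightarrow> nat)
    \<Rightarrow> nat \<Rightarrow> nat \<Rightarrow> nat \<Rightarrow> nat \<Rightarrow> nat \<Rightarrow> 'a \<Rightarrow> nat" where
  "inar_Y Y0 eps xi s1 s2 th1 th2 0 \<omega> = Y0 \<omega>"
| "inar_Y Y0 eps xi s1 s2 th1 th2 (Suc k) \<omega> =
     (\<Sum>j\<in>{1..inar_Y Y0 eps xi s1 s2 th1 th2 k \<omega>}. xi (Suc k) j \<omega>) + eps (Suc k) \<omega>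
     + (if Suc k = s1 then th1 else 0) + (if Suc k = s2 then th2 else 0)"

definition inar_Q :: "nat \<Rightarrow> nat \<Rightarrow> real \<Rightarrow> nat \<Rightarrow> (nat \<Rightarrow> real) \<Rightarrow> real \<Rightarrow> real \<Rightarrow> real \<Rightarrow> real" where
  "inar_Q s1 s2 \<mu> n y a t1 t2 =
     (\<Sum>k\<in>{1..n} - {s1, s2}. (y k - a * y (k - 1) - \<mu>)\<^sup>2)
     + (y s1 - a * y (s1 - 1) - \<mu> - t1)\<^sup>2 + (y s2 - a * y (s2 - 1) - \<mu> - t2)\<^sup>2"

definition inar_alpha_tilde :: "nat \<Rightarrow> nat \<Rightarrow> real \<Rightarrow> nat \<Rightarrow> (nat \<Rightarrow> real) \<Rightarrow> real" where
  "inar_alpha_tilde s1 s2 \<mu> n y =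
     (\<Sum>k\<in>{1..n} - {s1, s2}. (y k - \<mu>) * y (k - 1)) / (\<Sum>k\<in>{1..n} - {s1, s2}. (y (k - 1))\<^sup>2)"

definition inar_theta_tilde :: "nat \<Rightarrow> nat \<Rightarrow> real \<Rightarrow> nat \<Rightarrow> (nat \<Rightarrow> real) \<Rightarrow> nat \<Rightarrow> real" where
  "inar_theta_tilde s1 s2 \<mu> n y s = y s - inar_alpha_tilde s1 s2 \<mu> n y * y (s - 1) - \<mu>"

end

theory Submission
  imports Defs
begin

text \<open>
  The objective Q_n separates into the residual sum of squares at the non-outlier times,
  which depends on the slope only, and two squares that the outlier sizes fit exactly;
  so Q_n has a unique minimiser as soon as the regressor energy
  D_n = sum_{k \<le> n, k \<noteq> s1, s2} Y_{k-1}^2 is positive, which holds surely after both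
  outlier times.  For consistency we write tilde \<alpha>_n - \<alpha> = R_n / D_n, where R_n is a sum
  of score increments (Y_k - \<alpha> Y_{k-1} - \<mu>) Y_{k-1}.  These are martingale differences:
  conditioning on the past is realised by grafting a fresh, independent time-k block of
  primitive variables onto the configuration.  After truncating on Y_{k-1}^4 \<le> k^3, whose
  failure happens only finitely often by Borel--Cantelli and an L^2 bound on the process,
  Kolmogorov's maximal inequality along dyadic blocks gives R_n / n \<rightarrow> 0 a.s.  The same
  martingale SLLN applied to the indicators of nonzero innovations shows that D_n grows
  linearly, whence R_n / D_n \<rightarrow> 0.
\<close>

lemma least_squares_decomposition:
  fixes x z :: "nat \<Rightarrow> real" and K :: "nat set" and a b :: real
  assumes D: "(\<Sum>k\<in>K. (x k)\<^sup>2) \<noteq> 0" and b: "b = (\<Sum>k\<in>K. z k * x k) / (\<Sum>k\<in>K. (x k)\<^sup>2)"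
  shows "(\<Sum>k\<in>K. (z k - a * x k)\<^sup>2) = (\<Sum>k\<in>K. (z k - b * x k)\<^sup>2) + (a - b)\<^sup>2 * (\<Sum>k\<in>K. (x k)\<^sup>2)"
proof -
  define W where "W k = z k * x k - b * (x k)\<^sup>2" for k
  have pointwise: "(z k - a * x k)\<^sup>2 = ((z k - b * x k)\<^sup>2 + (a - b)\<^sup>2 * (x k)\<^sup>2) - 2 * (a - b) * W k" for k
    unfolding W_def by (simp add: power2_eq_square algebra_simps)
  have normal_eq: "(\<Sum>k\<in>K. W k) = 0"
    using D unfolding W_def sum_subtractf sum_distrib_left[symmetric] b by simp
  show ?thesis
    unfolding pointwise sum_subtractf sum.distrib sum_distrib_left[symmetric] normal_eq by simp
qed

lemma cls_unique_minimizer: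
  fixes y :: "nat \<Rightarrow> real"
  assumes D: "(\<Sum>k\<in>{1..n} - {s1, s2}. (y (k - 1))\<^sup>2) > 0"
  shows "let Q = (\<lambda>(a, t1, t2). inar_Q s1 s2 \<mu> n y a t1 t2);
                 p = (inar_alpha_tilde s1 s2 \<mu> n y, inar_theta_tilde s1 s2 \<mu> n y s1,
                      inar_theta_tilde s1 s2 \<mu> n y s2)
             in (\<forall>q. Q p \<le> Q q) \<and> (\<forall>q. (\<forall>r. Q q \<le> Q r) \<longrightarrow> q = p)"
proof -
  let ?K = "{1..n} - {s1, s2}"
  define b where "b = inar_alpha_tilde s1 s2 \<mu> n y"
  define D where "D = (\<Sum>k\<in>?K. (y (k - 1))\<^sup>2)"
  define RSS where "RSS = (\<Sum>k\<in>?K. (y k - b * y (k - 1) - \<mu>)\<^sup>2)"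
  define r where "r s a = y s - a * y (s - 1) - \<mu>" for s a
  have "D > 0" using D unfolding D_def .
  have Q_eq: "inar_Q s1 s2 \<mu> n y a t1 t2 = RSS + ((a - b)\<^sup>2 * D + (r s1 a - t1)\<^sup>2 + (r s2 a - t2)\<^sup>2)"
    for a t1 t2
  proof -
    have "(\<Sum>k\<in>?K. (y k - a * y (k - 1) - \<mu>)\<^sup>2) = RSS + (a - b)\<^sup>2 * D"
      using least_squares_decomposition[of "\<lambda>k. y (k - 1)" ?K b "\<lambda>k. y k - \<mu>" a] \<open>D > 0\<close>
      unfolding D_def RSS_def b_def inar_alpha_tilde_def by (simp add: algebra_simps)
    then show ?thesis unfolding inar_Q_def r_def by simp
  qed
  let ?Q = "\<lambda>(a, t1, t2). inar_Q s1 s2 \<mu> n y a t1 t2"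
  let ?p = "(inar_alpha_tilde s1 s2 \<mu> n y, inar_theta_tilde s1 s2 \<mu> n y s1, inar_theta_tilde s1 s2 \<mu> n y s2)"
  have p_eq: "?p = (b, r s1 b, r s2 b)" unfolding b_def r_def inar_theta_tilde_def by simp
  have Q_p: "?Q ?p = RSS" unfolding p_eq by (simp add: Q_eq)
  have minimal: "?Q ?p \<le> ?Q q" for q
  proof -
    obtain a t1 t2 where q: "q = (a, t1, t2)" by (cases q) auto
    show ?thesis unfolding Q_p q using \<open>D > 0\<close> by (simp add: Q_eq)
  qed
  have unique: "q = ?p" if "\<forall>q'. ?Q q \<le> ?Q q'" for q
  proof -
    obtain a t1 t2 where q: "q = (a, t1, t2)" by (cases q) auto
    have "?Q q \<le> ?Q ?p" using that by blast
    then have "(a - b)\<^sup>2 * D + (r s1 a - t1)\<^sup>2 + (r s2 a - t2)\<^sup>2 \<le> 0"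
      unfolding Q_p q by (simp add: Q_eq)
    moreover have "0 \<le> (a - b)\<^sup>2 * D" using \<open>D > 0\<close> by simp
    ultimately have "(a - b)\<^sup>2 * D = 0" "(r s1 a - t1)\<^sup>2 = 0" "(r s2 a - t2)\<^sup>2 = 0"
      by (smt (verit) zero_le_power2)+
    then show ?thesis unfolding q p_eq using \<open>D > 0\<close> by simp
  qed
  show ?thesis unfolding Let_def using minimal unique by blast
qed

lemma ratio_tendsto_zero:
  fixes g d :: "nat \<Rightarrow> real" and c :: real
  assumes g: "(\<lambda>n. g n / real n) \<longlonglongrightarrow> 0" and d: "eventually (\<lambda>n. c * real n \<le> d n) sequentially"
    and c: "c > 0"
  shows "(\<lambda>n. g n / d n) \<longlonglongrightarrow> 0"
proof (rule Lim_null_comparison)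
  show "eventually (\<lambda>n. norm (g n / d n) \<le> (1 / c) * \<bar>g n / real n\<bar>) sequentially"
    using d eventually_ge_at_top[of 1]
  proof eventually_elim
    case (elim n)
    then have n: "real n \<ge> 1" by simp
    have cn: "c * real n > 0" using c n by simp
    then have "d n > 0" using elim by linarith
    then have "norm (g n / d n) = \<bar>g n\<bar> / d n" by simp
    also have "\<dots> \<le> \<bar>g n\<bar> / (c * real n)" using elim cn by (intro divide_left_mono) auto
    also have "\<dots> = (1 / c) * \<bar>g n / real n\<bar>" using n c by simp
    finally show ?case .
  qed
  show "(\<lambda>n. (1 / c) * \<bar>g n / real n\<bar>) \<longlonglongrightarrow> 0"
    using tendsto_mult_right_zero[OF tendsto_rabs_zero[OF g], of "1/c"] by simp
qed

lemma average_eventually_eq: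
  fixes a b :: "nat \<Rightarrow> real"
  assumes b: "(\<lambda>n. (\<Sum>k\<in>{1..n}. b k) / real n) \<longlonglongrightarrow> 0"
    and ab: "eventually (\<lambda>k. a k = b k) sequentially"
  shows "(\<lambda>n. (\<Sum>k\<in>{1..n}. a k) / real n) \<longlonglongrightarrow> 0"
proof -
  obtain K0 where K0: "\<And>k. k \<ge> K0 \<Longrightarrow> a k = b k" using ab unfolding eventually_sequentially by blast
  define E where "E = (\<Sum>k\<in>{1..K0}. a k - b k)"
  have sum_split: "(\<Sum>k\<in>{1..n}. b k) / real n + E / real n = (\<Sum>k\<in>{1..n}. a k) / real n"
    if n: "n \<ge> K0" for n
  proof -
    have "(\<Sum>k\<in>{1..n}. a k - b k) = E"
      unfolding E_def by (rule sum.mono_neutral_right) (use n K0 in auto)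
    then have "(\<Sum>k\<in>{1..n}. b k) + E = (\<Sum>k\<in>{1..n}. a k)" by (simp add: sum_subtractf)
    then show ?thesis by (simp add: add_divide_distrib[symmetric])
  qed
  have "(\<lambda>n. (\<Sum>k\<in>{1..n}. b k) / real n + E / real n) \<longlonglongrightarrow> 0 + 0"
    by (intro tendsto_add b tendsto_divide_0[OF tendsto_const]
        filterlim_at_top_imp_at_infinity filterlim_real_sequentially)
  moreover have "eventually (\<lambda>n. (\<Sum>k\<in>{1..n}. b k) / real n + E / real n = (\<Sum>k\<in>{1..n}. a k) / real n) sequentially"
    using eventually_ge_at_top[of K0] by (rule eventually_mono) (rule sum_split)
  ultimately show ?thesis by (simp add: Lim_transform_eventually)
qed

lemma fourth_power_le_iff:
  fixes y k :: real
  assumes y: "y \<ge> 0" and k: "k > 0"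
  shows "y ^ 4 \<le> k ^ 3 \<longleftrightarrow> y \<le> k powr (3/4)"
proof -
  have "(k powr (3/4)) ^ 4 = k powr 3"
    using k by (subst powr_power) simp_all
  also have "\<dots> = k ^ 3" using powr_realpow[OF k, of 3] by simp
  finally have "y ^ 4 \<le> k ^ 3 \<longleftrightarrow> y ^ 4 \<le> (k powr (3/4)) ^ 4" by simp
  also have "\<dots> \<longleftrightarrow> y \<le> k powr (3/4)" using y by (intro power_mono_iff) simp_all
  finally show ?thesis .
qed

lemma square_sum_weighted_bound:
  fixes a b e :: real assumes "e > 0"
  shows "(a + b)\<^sup>2 \<le> (1 + e) * a\<^sup>2 + (1 + 1 / e) * b\<^sup>2"
proof -
  have "0 \<le> (e * a - b)\<^sup>2 / e" using assms by simp
  also have "(e * a - b)\<^sup>2 / e = (1 + e) * a\<^sup>2 + (1 + 1 / e) * b\<^sup>2 - (a + b)\<^sup>2"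
    using assms by (simp add: field_simps power2_eq_square)
  finally show ?thesis by simp
qed

text \<open>The dyadic-block series that controls the martingale SLLN for second moments
  growing like k^(3/4) converges: 2^(m+1) (a + (2^(m+1))^(3/4)) / 4^m is summable.\<close>
lemma summable_dyadic_moment_bound:
  fixes a :: real
  shows "summable (\<lambda>m::nat. real (2^(m+1)) * (a + real (2^(m+1)) powr (3/4)) / 4^m)"
proof -
  define r where "r = (2::real) powr (3/4) / 2"
  have "r < 1"
  proof -
    have "(2::real) powr (3/4) < 2 powr 1" by (rule powr_less_mono) auto
    then show ?thesis unfolding r_def by simp
  qed
  have eq: "real (2^(m+1)) * (a + real (2^(m+1)) powr (3/4)) / 4^m
      = 2 * a * (1/2)^m + 2 * 2 powr (3/4) * r^m" for m :: nat
  proof -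
    have "real (2^(m+1)) = (2::real) powr (real (m+1))" by (subst powr_realpow) auto
    then have "real (2^(m+1)) powr (3/4) = 2 powr (real (m+1) * (3/4))" by (simp add: powr_powr)
    also have "\<dots> = 2 powr (3/4 + real m * (3/4))"
      by (rule arg_cong[where f="\<lambda>x. (2::real) powr x"]) (simp add: algebra_simps)
    also have "\<dots> = 2 powr (3/4) * (2 powr (3/4))^m"
      by (simp add: powr_add powr_power)
    finally have p: "real (2^(m+1)) powr (3/4) = 2 powr (3/4) * (2 powr (3/4))^m" .
    have f4: "(4::real)^m = 2^m * 2^m" by (simp flip: power_mult_distrib)
    have rm: "r^m = (2 powr (3/4))^m / 2^m" unfolding r_def by (simp add: power_divide)
    show ?thesis unfolding p rm f4 by (simp add: field_simps power_one_over)
  qed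
  show ?thesis unfolding eq
    by (intro summable_add summable_mult summable_geometric) (use \<open>r < 1\<close> in \<open>auto simp: r_def\<close>)
qed

lemma telescope_diff:
  fixes S :: "nat \<Rightarrow> real"
  shows "k \<le> n \<Longrightarrow> S n - S k = (\<Sum>j\<in>{Suc k..n}. S j - S (j - 1))"
proof (induction n)
  case (Suc n)
  show ?case
  proof (cases "k \<le> n")
    case True
    then show ?thesis using Suc.IH by (simp add: sum.cl_ivl_Suc)
  next
    case False
    then show ?thesis using Suc.prems by (simp add: le_Suc_eq)
  qed
qed simp

lemma (in prob_space) integrable_mult_of_square_integrable:
  fixes f g :: "'a \<Rightarrow> real"
  assumes [measurable]: "f \<in> borel_measurable M" "g \<in> borel_measurable M"
    and "integrable M (\<lambda>\<omega>. (f \<omega>)\<^sup>2)" "integrable M (\<lambda>\<omega>. (g \<omega>)\<^sup>2)"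
  shows "integrable M (\<lambda>\<omega>. f \<omega> * g \<omega>)"
proof (rule Bochner_Integration.integrable_bound[of _ "\<lambda>\<omega>. (f \<omega>)\<^sup>2 + (g \<omega>)\<^sup>2"])
  show "integrable M (\<lambda>\<omega>. (f \<omega>)\<^sup>2 + (g \<omega>)\<^sup>2)" using assms by simp
  show "AE x in M. norm (f x * g x) \<le> norm ((f x)\<^sup>2 + (g x)\<^sup>2)"
  proof
    fix x
    have "0 \<le> (\<bar>f x\<bar> - \<bar>g x\<bar>)\<^sup>2" by simp
    then have "2 * \<bar>f x * g x\<bar> \<le> (f x)\<^sup>2 + (g x)\<^sup>2"
      by (simp add: power2_eq_square abs_mult algebra_simps)
    then show "norm (f x * g x) \<le> norm ((f x)\<^sup>2 + (g x)\<^sup>2)" by simp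
  qed
qed simp

lemma (in prob_space) orthogonal_sum_square:
  fixes Z :: "'i \<Rightarrow> 'a \<Rightarrow> real"
  assumes A: "finite A"
    and meas[measurable]: "\<And>a. a \<in> A \<Longrightarrow> Z a \<in> borel_measurable M"
    and sq: "\<And>a. a \<in> A \<Longrightarrow> integrable M (\<lambda>\<omega>. (Z a \<omega>)\<^sup>2)"
    and orth: "\<And>a b. a \<in> A \<Longrightarrow> b \<in> A \<Longrightarrow> a \<noteq> b \<Longrightarrow> (\<integral>\<omega>. Z a \<omega> * Z b \<omega> \<partial>M) = 0"
  shows "integrable M (\<lambda>\<omega>. (\<Sum>a\<in>A. Z a \<omega>)\<^sup>2)"
    and "(\<integral>\<omega>. (\<Sum>a\<in>A. Z a \<omega>)\<^sup>2 \<partial>M) = (\<Sum>a\<in>A. \<integral>\<omega>. (Z a \<omega>)\<^sup>2 \<partial>M)"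
proof -
  have expand: "(\<Sum>a\<in>A. Z a \<omega>)\<^sup>2 = (\<Sum>a\<in>A. \<Sum>b\<in>A. Z a \<omega> * Z b \<omega>)" for \<omega>
    by (simp add: power2_eq_square sum_product)
  have int: "integrable M (\<lambda>\<omega>. Z a \<omega> * Z b \<omega>)" if "a \<in> A" "b \<in> A" for a b
    using that by (intro integrable_mult_of_square_integrable meas sq)
  show "integrable M (\<lambda>\<omega>. (\<Sum>a\<in>A. Z a \<omega>)\<^sup>2)"
    unfolding expand by (intro Bochner_Integration.integrable_sum int)
  have diagonal: "(\<Sum>b\<in>A. \<integral>\<omega>. Z a \<omega> * Z b \<omega> \<partial>M) = (\<integral>\<omega>. Z a \<omega> * Z a \<omega> \<partial>M)" if a: "a \<in> A" for a
  proof -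
    have "(\<Sum>b\<in>A. \<integral>\<omega>. Z a \<omega> * Z b \<omega> \<partial>M) = (\<Sum>b\<in>{a}. \<integral>\<omega>. Z a \<omega> * Z b \<omega> \<partial>M)"
      by (rule sum.mono_neutral_right) (use A a orth in auto)
    then show ?thesis by simp
  qed
  have "(\<integral>\<omega>. (\<Sum>a\<in>A. Z a \<omega>)\<^sup>2 \<partial>M) = (\<Sum>a\<in>A. \<Sum>b\<in>A. \<integral>\<omega>. Z a \<omega> * Z b \<omega> \<partial>M)"
    unfolding expand by (simp add: int integrable_sum)
  also have "\<dots> = (\<Sum>a\<in>A. \<integral>\<omega>. Z a \<omega> * Z a \<omega> \<partial>M)"
    by (rule sum.cong[OF refl]) (rule diagonal)
  finally show "(\<integral>\<omega>. (\<Sum>a\<in>A. Z a \<omega>)\<^sup>2 \<partial>M) = (\<Sum>a\<in>A. \<integral>\<omega>. (Z a \<omega>)\<^sup>2 \<partial>M)"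
    by (simp add: power2_eq_square)
qed

text \<open>This is how conditional expectations given the past are computed below.\<close>
lemma (in prob_space) indep_var_nn_integral_split:
  fixes h :: "'b \<times> 'b \<Rightarrow> ennreal"
  assumes ind: "indep_var MA A MB B" and h: "h \<in> borel_measurable (MA \<Otimes>\<^sub>M MB)"
  shows "(\<integral>\<^sup>+\<omega>. h (A \<omega>, B \<omega>) \<partial>M) = (\<integral>\<^sup>+\<omega>. \<integral>\<^sup>+\<omega>'. h (A \<omega>, B \<omega>') \<partial>M \<partial>M)"
proof -
  have rvA: "A \<in> measurable M MA" and rvB: "B \<in> measurable M MB"
    using ind by (auto dest: indep_var_rv1 indep_var_rv2)
  interpret DA: prob_space "distr M MA A" by (rule prob_space_distr[OF rvA])
  interpret DB: prob_space "distr M MB B" by (rule prob_space_distr[OF rvB])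
  have joint: "distr M MA A \<Otimes>\<^sub>M distr M MB B = distr M (MA \<Otimes>\<^sub>M MB) (\<lambda>x. (A x, B x))"
    using ind by (simp add: indep_var_distribution_eq)
  have "(\<integral>\<^sup>+\<omega>. h (A \<omega>, B \<omega>) \<partial>M) = (\<integral>\<^sup>+z. h z \<partial>distr M (MA \<Otimes>\<^sub>M MB) (\<lambda>x. (A x, B x)))"
    by (rule nn_integral_distr[symmetric]) (use rvA rvB h in \<open>auto intro: measurable_Pair\<close>)
  also have "\<dots> = (\<integral>\<^sup>+w. \<integral>\<^sup>+v. h (w, v) \<partial>distr M MB B \<partial>distr M MA A)"
    unfolding joint[symmetric] by (rule DB.nn_integral_fst[symmetric]) (use h in simp)
  also have "\<dots> = (\<integral>\<^sup>+\<omega>. \<integral>\<^sup>+v. h (A \<omega>, v) \<partial>distr M MB B \<partial>M)"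
    by (rule nn_integral_distr[OF rvA]) (use h in \<open>auto intro: DB.borel_measurable_nn_integral_fst\<close>)
  also have "\<dots> = (\<integral>\<^sup>+\<omega>. \<integral>\<^sup>+\<omega>'. h (A \<omega>, B \<omega>') \<partial>M \<partial>M)"
    by (intro nn_integral_cong nn_integral_distr[OF rvB]) (use h rvA in auto)
  finally show ?thesis .
qed

lemma (in prob_space) indep_var_integral_split:
  fixes h :: "'b \<times> 'b \<Rightarrow> real"
  assumes ind: "indep_var MA A MB B" and h: "h \<in> borel_measurable (MA \<Otimes>\<^sub>M MB)"
    and int: "integrable M (\<lambda>\<omega>. h (A \<omega>, B \<omega>))"
  shows "(\<integral>\<omega>. h (A \<omega>, B \<omega>) \<partial>M) = (\<integral>\<omega>. \<integral>\<omega>'. h (A \<omega>, B \<omega>') \<partial>M \<partial>M)"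
proof -
  have rvA: "A \<in> measurable M MA" and rvB: "B \<in> measurable M MB"
    using ind by (auto dest: indep_var_rv1 indep_var_rv2)
  interpret DA: prob_space "distr M MA A" by (rule prob_space_distr[OF rvA])
  interpret DB: prob_space "distr M MB B" by (rule prob_space_distr[OF rvB])
  interpret DAB: pair_prob_space "distr M MA A" "distr M MB B" ..
  have joint: "distr M MA A \<Otimes>\<^sub>M distr M MB B = distr M (MA \<Otimes>\<^sub>M MB) (\<lambda>x. (A x, B x))"
    using ind by (simp add: indep_var_distribution_eq)
  have h_int: "integrable (distr M MA A \<Otimes>\<^sub>M distr M MB B) h"
    unfolding joint using h rvA rvB int
    by (subst integrable_distr_eq) (auto intro: measurable_Pair)
  have "(\<integral>\<omega>. h (A \<omega>, B \<omega>) \<partial>M) = (\<integral>z. h z \<partial>distr M (MA \<Otimes>\<^sub>M MB) (\<lambda>x. (A x, B x)))"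
    by (rule integral_distr[symmetric]) (use rvA rvB h in \<open>auto intro: measurable_Pair\<close>)
  also have "\<dots> = (\<integral>w. \<integral>v. h (w, v) \<partial>distr M MB B \<partial>distr M MA A)"
    unfolding joint[symmetric] by (rule DAB.integral_fst'[symmetric]) (rule h_int)
  also have "\<dots> = (\<integral>\<omega>. \<integral>v. h (A \<omega>, v) \<partial>distr M MB B \<partial>M)"
    by (rule integral_distr[OF rvA]) (use h in \<open>auto intro: DB.borel_measurable_lebesgue_integral\<close>)
  also have "\<dots> = (\<integral>\<omega>. \<integral>\<omega>'. h (A \<omega>, B \<omega>') \<partial>M \<partial>M)"
  proof (rule Bochner_Integration.integral_cong[OF refl])
    fix \<omega> assume "\<omega> \<in> space M"
    then have "(\<lambda>v. h (A \<omega>, v)) \<in> borel_measurable MB"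
      using h measurable_space[OF rvA] by (intro measurable_compose_Pair1) auto
    then show "(\<integral>v. h (A \<omega>, v) \<partial>distr M MB B) = (\<integral>\<omega>'. h (A \<omega>, B \<omega>') \<partial>M)"
      by (rule integral_distr[OF rvB])
  qed
  finally show ?thesis .
qed

definition first_passage :: "'a measure \<Rightarrow> (nat \<Rightarrow> 'a \<Rightarrow> real) \<Rightarrow> real \<Rightarrow> nat \<Rightarrow> 'a set" where
  "first_passage M S lam k = {\<omega>\<in>space M. lam \<le> \<bar>S k \<omega>\<bar> \<and> (\<forall>i<k. \<bar>S i \<omega>\<bar> < lam)}"

lemma first_passage_disjoint: "disjoint_family (first_passage M S lam)"
  unfolding disjoint_family_on_def first_passage_def by (auto, metis linorder_neqE_nat not_less)

lemma first_passage_Union: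
  "{\<omega>\<in>space M. \<exists>k\<le>n. lam \<le> \<bar>S k \<omega>\<bar>} = (\<Union>k\<in>{..n}. first_passage M S lam k)"
proof safe
  fix \<omega> k assume \<omega>: "\<omega> \<in> space M" and k: "k \<le> n" "lam \<le> \<bar>S k \<omega>\<bar>"
  define k0 where "k0 = (LEAST i. lam \<le> \<bar>S i \<omega>\<bar>)"
  have "lam \<le> \<bar>S k0 \<omega>\<bar>" unfolding k0_def by (rule LeastI[of _ k]) (use k in auto)
  moreover have "k0 \<le> k" unfolding k0_def by (rule Least_le) (use k in auto)
  moreover have "\<forall>i<k0. \<bar>S i \<omega>\<bar> < lam" unfolding k0_def using not_less_Least by force
  ultimately show "\<omega> \<in> (\<Union>k\<in>{..n}. first_passage M S lam k)"
    using \<omega> k unfolding first_passage_def by auto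
qed (auto simp: first_passage_def)

text \<open>Core estimate of Kolmogorov's inequality: on the event of first passage at step k,
  the final second moment dominates lam^2, because the later increments are orthogonal
  to S k on that event.\<close>
lemma (in prob_space) first_passage_second_moment:
  fixes S :: "nat \<Rightarrow> 'a \<Rightarrow> real" and lam :: real
  assumes lam: "lam > 0" and k: "k \<le> n"
    and Sm[measurable]: "\<And>k. S k \<in> borel_measurable M"
    and Ssq: "\<And>k. k \<le> n \<Longrightarrow> integrable M (\<lambda>\<omega>. (S k \<omega>)\<^sup>2)"
    and orth: "\<And>j. k < j \<Longrightarrow> j \<le> n \<Longrightarrow>
       (\<integral>\<omega>. (S j \<omega> - S (j - 1) \<omega>) * (S k \<omega> * indicator (first_passage M S lam k) \<omega>) \<partial>M) = 0"
  shows "lam\<^sup>2 * prob (first_passage M S lam k) \<le> (\<integral>\<omega>. (S n \<omega>)\<^sup>2 * indicator (first_passage M S lam k) \<omega> \<partial>M)"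
proof -
  define A where "A = first_passage M S lam k"
  define H where "H \<omega> = S k \<omega> * indicator A \<omega>" for \<omega>
  define R where "R \<omega> = S n \<omega> - S k \<omega>" for \<omega>
  have A[measurable]: "A \<in> sets M" unfolding A_def first_passage_def by measurable
  have Hm[measurable]: "H \<in> borel_measurable M" and Rm[measurable]: "R \<in> borel_measurable M"
    unfolding H_def R_def by measurable
  have cut: "integrable M (\<lambda>\<omega>. f \<omega> * indicator A \<omega>)" if "integrable M f" "f \<in> borel_measurable M"
    for f :: "'a \<Rightarrow> real"
    using that(1) by (rule Bochner_Integration.integrable_bound) (use that(2) in \<open>auto simp: indicator_def\<close>)
  have H_sq: "integrable M (\<lambda>\<omega>. (H \<omega>)\<^sup>2)"
    unfolding H_def by (rule Bochner_Integration.integrable_bound[OF Ssq[OF k]]) (auto simp: indicator_def)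
  have diff_sq: "integrable M (\<lambda>\<omega>. (S j \<omega> - S i \<omega>)\<^sup>2)" if "j \<le> n" "i \<le> n" for i j
  proof -
    have "(\<lambda>\<omega>. (S j \<omega> - S i \<omega>)\<^sup>2) = (\<lambda>\<omega>. (S j \<omega>)\<^sup>2 + (S i \<omega>)\<^sup>2 - 2 * (S j \<omega> * S i \<omega>))"
      by (auto simp: power2_eq_square algebra_simps)
    then show ?thesis using Ssq that integrable_mult_of_square_integrable[OF Sm Sm Ssq Ssq] by simp
  qed
  have incr_int: "integrable M (\<lambda>\<omega>. (S j \<omega> - S (j - 1) \<omega>) * H \<omega>)" if "j \<in> {Suc k..n}" for j
    using that by (intro integrable_mult_of_square_integrable H_sq diff_sq) auto
  have HR_int: "integrable M (\<lambda>\<omega>. H \<omega> * R \<omega>)"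
    using k unfolding R_def by (intro integrable_mult_of_square_integrable H_sq diff_sq) auto
  have HR_zero: "(\<integral>\<omega>. H \<omega> * R \<omega> \<partial>M) = 0"
  proof -
    have "H \<omega> * R \<omega> = (\<Sum>j\<in>{Suc k..n}. (S j \<omega> - S (j - 1) \<omega>) * H \<omega>)" for \<omega>
      using telescope_diff[OF k, of "\<lambda>i. S i \<omega>"] unfolding R_def
      by (simp add: sum_distrib_left mult.commute)
    then show ?thesis
      using orth incr_int unfolding H_def A_def by (simp add: integral_sum)
  qed
  have "lam\<^sup>2 * prob A = (\<integral>\<omega>. lam\<^sup>2 * indicator A \<omega> \<partial>M)"
    by (simp add: Int_absorb2 sets.sets_into_space)
  also have "\<dots> \<le> (\<integral>\<omega>. (S k \<omega>)\<^sup>2 * indicator A \<omega> \<partial>M)"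
    using lam by (intro integral_mono cut Ssq[OF k])
      (auto simp: indicator_def A_def first_passage_def abs_le_square_iff[symmetric] less_top[symmetric])
  also have "\<dots> = (\<integral>\<omega>. (S k \<omega>)\<^sup>2 * indicator A \<omega> + 2 * (H \<omega> * R \<omega>) \<partial>M)"
    using cut[OF Ssq[OF k]] HR_int HR_zero by simp
  also have "\<dots> \<le> (\<integral>\<omega>. (S n \<omega>)\<^sup>2 * indicator A \<omega> \<partial>M)"
  proof (rule integral_mono)
    fix \<omega>
    have "0 \<le> (R \<omega>)\<^sup>2 * indicator A \<omega>" by simp
    then show "(S k \<omega>)\<^sup>2 * indicator A \<omega> + 2 * (H \<omega> * R \<omega>) \<le> (S n \<omega>)\<^sup>2 * indicator A \<omega>"
      unfolding H_def R_def by (auto simp: indicator_def power2_eq_square algebra_simps)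
  qed (use cut[OF Ssq[OF k]] cut[OF Ssq[of n]] HR_int in simp_all)
  finally show ?thesis unfolding A_def .
qed

lemma (in prob_space) kolmogorov_maximal_inequality:
  fixes S :: "nat \<Rightarrow> 'a \<Rightarrow> real" and n :: nat and lam :: real
  assumes lam: "lam > 0"
    and Sm[measurable]: "\<And>k. S k \<in> borel_measurable M"
    and Ssq: "\<And>k. k \<le> n \<Longrightarrow> integrable M (\<lambda>\<omega>. (S k \<omega>)\<^sup>2)"
    and orth: "\<And>k j. k < j \<Longrightarrow> j \<le> n \<Longrightarrow>
       (\<integral>\<omega>. (S j \<omega> - S (j - 1) \<omega>) * (S k \<omega> * indicator (first_passage M S lam k) \<omega>) \<partial>M) = 0"
  shows "prob {\<omega>\<in>space M. \<exists>k\<le>n. lam \<le> \<bar>S k \<omega>\<bar>} \<le> (\<integral>\<omega>. (S n \<omega>)\<^sup>2 \<partial>M) / lam\<^sup>2"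
proof -
  define A where "A = first_passage M S lam"
  have Am[measurable]: "A k \<in> sets M" for k unfolding A_def first_passage_def by measurable
  have cut: "integrable M (\<lambda>\<omega>. (S n \<omega>)\<^sup>2 * indicator (A k) \<omega>)" for k
    using Ssq[of n] by (rule Bochner_Integration.integrable_bound) (auto simp: indicator_def)
  have "lam\<^sup>2 * prob {\<omega>\<in>space M. \<exists>k\<le>n. lam \<le> \<bar>S k \<omega>\<bar>} = (\<Sum>k\<in>{..n}. lam\<^sup>2 * prob (A k))"
  proof -
    have "disjoint_family_on A {..n}"
      unfolding A_def by (rule disjoint_family_on_mono[OF subset_UNIV first_passage_disjoint])
    then show ?thesis
      unfolding first_passage_Union A_def[symmetric]
      using finite_measure_finite_Union[of "{..n}" A] Am by (simp add: sum_distrib_left image_subset_iff)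
  qed
  also have "\<dots> \<le> (\<Sum>k\<in>{..n}. \<integral>\<omega>. (S n \<omega>)\<^sup>2 * indicator (A k) \<omega> \<partial>M)"
    unfolding A_def by (intro sum_mono first_passage_second_moment lam Ssq orth) auto
  also have "\<dots> = (\<integral>\<omega>. (\<Sum>k\<in>{..n}. (S n \<omega>)\<^sup>2 * indicator (A k) \<omega>) \<partial>M)"
    by (rule Bochner_Integration.integral_sum[symmetric]) (rule cut)
  also have "\<dots> \<le> (\<integral>\<omega>. (S n \<omega>)\<^sup>2 \<partial>M)"
  proof (rule integral_mono[OF _ Ssq[OF order.refl]])
    show "integrable M (\<lambda>\<omega>. \<Sum>k\<in>{..n}. (S n \<omega>)\<^sup>2 * indicator (A k) \<omega>)"
      by (intro Bochner_Integration.integrable_sum cut)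
    fix \<omega>
    show "(\<Sum>k\<in>{..n}. (S n \<omega>)\<^sup>2 * indicator (A k) \<omega>) \<le> (S n \<omega>)\<^sup>2"
    proof (cases "\<exists>j\<in>{..n}. \<omega> \<in> A j")
      case True
      then obtain j where "j \<in> {..n}" "\<omega> \<in> A j" by blast
      then have "(\<Sum>k\<in>{..n}. (\<lambda>_. (S n \<omega>)\<^sup>2) k * indicator (A k) \<omega>) = (S n \<omega>)\<^sup>2"
        unfolding A_def
        by (intro sum_indicator_disjoint_family disjoint_family_on_mono[OF subset_UNIV first_passage_disjoint]) auto
      then show ?thesis by (simp only:)
    qed (auto simp: indicator_def)
  qed
  finally show ?thesis using lam by (simp add: field_simps)
qed

lemma (in prob_space) slln_from_dyadic_maxima:
  fixes S :: "nat \<Rightarrow> 'a \<Rightarrow> real"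
  assumes Sm[measurable]: "\<And>k. S k \<in> borel_measurable M"
    and summ: "\<And>\<delta>. \<delta> > 0 \<Longrightarrow> summable (\<lambda>m. prob {\<omega>\<in>space M. \<exists>k\<le>2^(m+1). \<delta> * 2^m \<le> \<bar>S k \<omega>\<bar>})"
  shows "AE \<omega> in M. (\<lambda>n. S n \<omega> / real n) \<longlonglongrightarrow> 0"
proof -
  define B where "B q m = {\<omega>\<in>space M. \<exists>k\<le>2^(m+1). (1 / real (Suc q)) * 2^m \<le> \<bar>S k \<omega>\<bar>}" for q m :: nat
  have Bm[measurable]: "B q m \<in> sets M" for q m unfolding B_def by measurable
  have "AE \<omega> in M. \<forall>q. eventually (\<lambda>m. \<omega> \<in> space M - B q m) sequentially"
  proof (subst AE_all_countable, intro allI)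
    fix q
    show "AE \<omega> in M. eventually (\<lambda>m. \<omega> \<in> space M - B q m) sequentially"
      by (rule borel_cantelli_AE1) (use summ[of "1 / real (Suc q)"] in \<open>auto simp: B_def less_top[symmetric]\<close>)
  qed
  then show ?thesis
  proof (rule AE_mp, intro AE_I2 impI)
    fix \<omega> assume \<omega>: "\<omega> \<in> space M" and ev: "\<forall>q. eventually (\<lambda>m. \<omega> \<in> space M - B q m) sequentially"
    show "(\<lambda>n. S n \<omega> / real n) \<longlonglongrightarrow> 0"
    proof (rule LIMSEQ_I)
      fix r :: real assume r: "0 < r"
      obtain q where q: "1 / real (Suc q) < r"
        using reals_Archimedean[OF r] by (auto simp: field_simps)
      obtain M0 where M0: "\<And>m. m \<ge> M0 \<Longrightarrow> \<omega> \<notin> B q m"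
        using ev[rule_format, of q] unfolding eventually_sequentially by blast
      show "\<exists>no. \<forall>n\<ge>no. norm (S n \<omega> / real n - 0) < r"
      proof (intro exI[of _ "2 ^ M0"] allI impI)
        fix n :: nat assume n: "n \<ge> 2 ^ M0"
        then have n1: "n \<ge> 1" using one_le_power[of "2::nat" M0] by linarith
        obtain m where m: "2 ^ m \<le> n" "n < 2 ^ (m + 1)" using ex_power_ivl1[of 2 n] n1 by auto
        have "M0 < m + 1"
          using n m(2) by (metis le_less_trans power_less_imp_less_exp one_less_numeral_iff semiring_norm(76))
        then have "\<omega> \<notin> B q m" using M0 by simp
        then have "\<bar>S n \<omega>\<bar> < (1 / real (Suc q)) * 2^m"
          using \<omega> m(2) unfolding B_def by (auto simp: not_le dest!: spec[of _ n])
        also have "\<dots> \<le> (1 / real (Suc q)) * real n"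
          using m(1) by (intro mult_left_mono) (simp_all add: of_nat_le_iff[symmetric])
        finally have "\<bar>S n \<omega>\<bar> / real n < 1 / real (Suc q)" using n1 by (simp add: field_simps)
        then show "norm (S n \<omega> / real n - 0) < r" using q by simp
      qed
    qed
  qed
qed

text \<open>The process is a deterministic function of the configuration; studying this function
  separates the combinatorics of the recursion from the probability.\<close>
primrec Ycfg :: "nat \<Rightarrow> nat \<Rightarrow> nat \<Rightarrow> nat \<Rightarrow> nat \<Rightarrow> (inar_idx \<Rightarrow> nat) \<Rightarrow> nat" where
  "Ycfg s1 s2 th1 th2 0 f = f IY0"
| "Ycfg s1 s2 th1 th2 (Suc k) f = (\<Sum>j\<in>{1..Ycfg s1 s2 th1 th2 k f}. f (IXi (Suc k) j)) + f (IEps (Suc k))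
     + (if Suc k = s1 then th1 else 0) + (if Suc k = s2 then th2 else 0)"

lemma inar_Y_Ycfg: "inar_Y Y0 eps xi s1 s2 th1 th2 k \<omega> = Ycfg s1 s2 th1 th2 k (\<lambda>i. inar_family Y0 eps xi i \<omega>)"
  by (induction k) auto

definition past :: "nat \<Rightarrow> inar_idx set" where
  "past k = {IY0} \<union> {IEps i | i. 1 \<le> i \<and> i \<le> k} \<union> {IXi i j | i j. 1 \<le> i \<and> i \<le> k \<and> 1 \<le> j}"

definition block :: "nat \<Rightarrow> inar_idx set" where
  "block k = {IEps k} \<union> {IXi k j | j. 1 \<le> j}"

lemma past_block_split: "k \<ge> 1 \<Longrightarrow> past k = past (k - 1) \<union> block k"
  unfolding past_def block_def by (cases k) (auto simp: le_Suc_eq)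

lemma past_block_disjoint: "k \<ge> 1 \<Longrightarrow> past (k - 1) \<inter> block k = {}"
  unfolding past_def block_def by auto

lemma past_subset: "past k \<subseteq> inar_index_set"
  unfolding past_def inar_index_set_def by auto

lemma block_subset: "k \<ge> 1 \<Longrightarrow> block k \<subseteq> inar_index_set"
  unfolding block_def inar_index_set_def by auto

lemma past_mono: "k \<le> m \<Longrightarrow> past k \<subseteq> past m"
  unfolding past_def by auto

text \<open>A functional of configurations is determined by the index set I if it only
  reads the coordinates in I (the discrete counterpart of adaptedness).\<close>
definition determined_by :: "inar_idx set \<Rightarrow> ((inar_idx \<Rightarrow> nat) \<Rightarrow> 'b) \<Rightarrow> bool" where
  "determined_by I F \<longleftrightarrow> (\<forall>f g. (\<forall>i\<in>I. f i = g i) \<longrightarrow> F f = F g)"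

lemma determined_byD: "determined_by I F \<Longrightarrow> (\<And>i. i \<in> I \<Longrightarrow> f i = g i) \<Longrightarrow> F f = F g"
  unfolding determined_by_def by blast

lemma determined_byI: "(\<And>f g. (\<And>i. i \<in> I \<Longrightarrow> f i = g i) \<Longrightarrow> F f = F g) \<Longrightarrow> determined_by I F"
  unfolding determined_by_def by blast

lemma determined_by_mono: "I \<subseteq> J \<Longrightarrow> determined_by I F \<Longrightarrow> determined_by J F"
  unfolding determined_by_def by blast

lemma determined_by_past_mono: "k \<le> m \<Longrightarrow> determined_by (past k) F \<Longrightarrow> determined_by (past m) F"
  by (rule determined_by_mono[OF past_mono])

lemma determined_by_comp: "determined_by I F \<Longrightarrow> determined_by I (\<lambda>f. g (F f))"
  unfolding determined_by_def by metis

lemma determined_by_mult: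
  fixes F G :: "(inar_idx \<Rightarrow> nat) \<Rightarrow> real"
  shows "determined_by I F \<Longrightarrow> determined_by I G \<Longrightarrow> determined_by I (\<lambda>f. F f * G f)"
  unfolding determined_by_def by metis

lemma Ycfg_determined: "determined_by (past k) (Ycfg s1 s2 th1 th2 k)"
proof (induction k)
  case 0 then show ?case by (simp add: past_def determined_by_def)
next
  case (Suc k)
  show ?case
  proof (rule determined_byI)
    fix f g :: "inar_idx \<Rightarrow> nat" assume fg: "\<And>i. i \<in> past (Suc k) \<Longrightarrow> f i = g i"
    have "Ycfg s1 s2 th1 th2 k f = Ycfg s1 s2 th1 th2 k g"
      using Suc fg past_mono[of k "Suc k"] by (auto elim!: determined_byD)
    moreover have "f (IXi (Suc k) j) = g (IXi (Suc k) j)" if "j \<ge> 1" for j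
      using fg that by (auto simp: past_def)
    moreover have "f (IEps (Suc k)) = g (IEps (Suc k))"
      using fg by (auto simp: past_def)
    ultimately show "Ycfg s1 s2 th1 th2 (Suc k) f = Ycfg s1 s2 th1 th2 (Suc k) g" by simp
  qed
qed

abbreviation cfg_space :: "(inar_idx \<Rightarrow> nat) measure" where
  "cfg_space \<equiv> PiM inar_index_set (\<lambda>_. count_space UNIV)"

text \<open>Sums of measurable counting-space-valued functions (stated separately because the
  measurability prover is confused by sums of coordinates of the product space).\<close>
lemma measurable_add_nat:
  fixes f g :: "'b \<Rightarrow> nat"
  assumes [measurable]: "f \<in> measurable N (count_space UNIV)" "g \<in> measurable N (count_space UNIV)"
  shows "(\<lambda>x. f x + g x) \<in> measurable N (count_space UNIV)"
  by measurable

text \<open>Every coordinate is measurable on the configuration space (outside the index set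
  it is the constant undefined on the extensional configurations).\<close>
lemma measurable_coordinate: "(\<lambda>f. f i) \<in> measurable cfg_space (count_space UNIV)"
proof (cases "i \<in> inar_index_set")
  case False
  then have "f i = undefined" if "f \<in> space cfg_space" for f
    using that by (auto simp: space_PiM PiE_def extensional_def)
  then show ?thesis by (subst measurable_cong[where g="\<lambda>_. undefined"]) simp_all
qed (rule measurable_component_singleton)

lemma measurable_real_coordinate[measurable]: "(\<lambda>f. real (f i)) \<in> borel_measurable cfg_space"
  using measurable_compose[OF measurable_coordinate, of real borel] by (simp add: comp_def)

lemma measurable_Ycfg[measurable]: "Ycfg s1 s2 th1 th2 k \<in> measurable cfg_space (count_space UNIV)"
proof (induction k)
  case (Suc k)
  have "(\<lambda>f. \<Sum>j\<in>{1..n}. f (IXi (Suc k) j)) \<in> measurable cfg_space (count_space UNIV)" for n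
    using measurable_coordinate by measurable
  from measurable_compose_countable'[OF this Suc]
  have "(\<lambda>f. \<Sum>j\<in>{1..Ycfg s1 s2 th1 th2 k f}. f (IXi (Suc k) j)) \<in> measurable cfg_space (count_space UNIV)"
    by simp
  then show ?case
    unfolding Ycfg.simps by (intro measurable_add_nat measurable_coordinate measurable_const) simp_all
qed (simp add: measurable_coordinate)

text \<open>The configuration that keeps the past before time k from f but takes the fresh
  time-k block from g.  Integrating g against an independent copy realises conditioning
  on the past.\<close>
definition graft :: "nat \<Rightarrow> (inar_idx \<Rightarrow> nat) \<Rightarrow> (inar_idx \<Rightarrow> nat) \<Rightarrow> (inar_idx \<Rightarrow> nat)" where
  "graft k f g = restrict (\<lambda>i. if i \<in> past (k - 1) then f i else if i \<in> block k then g i else 0) inar_index_set"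

lemma graft_past: "i \<in> past (k - 1) \<Longrightarrow> graft k f g i = f i"
  unfolding graft_def using past_subset by auto

lemma graft_block: "k \<ge> 1 \<Longrightarrow> i \<in> block k \<Longrightarrow> graft k f g i = g i"
  unfolding graft_def using block_subset past_block_disjoint by auto

lemma graft_xi: "k \<ge> 1 \<Longrightarrow> l \<ge> 1 \<Longrightarrow> graft k f g (IXi k l) = g (IXi k l)"
  by (rule graft_block) (auto simp: block_def)

lemma graft_eps: "k \<ge> 1 \<Longrightarrow> graft k f g (IEps k) = g (IEps k)"
  by (rule graft_block) (auto simp: block_def)

lemma graft_diag: "k \<ge> 1 \<Longrightarrow> determined_by (past k) F \<Longrightarrow> F (graft k f f) = F f"
  by (erule determined_byD) (auto simp: past_block_split graft_past graft_block)

lemma graft_cong: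
  "(\<And>i. i \<in> past (k - 1) \<Longrightarrow> f i = f' i) \<Longrightarrow> (\<And>i. i \<in> block k \<Longrightarrow> g i = g' i) \<Longrightarrow> graft k f g = graft k f' g'"
  unfolding graft_def by (auto simp: fun_eq_iff)

lemma measurable_graft:
  "(\<lambda>z. graft k (fst z) (snd z))
     \<in> measurable (PiM (past (k - 1)) (\<lambda>_. count_space UNIV) \<Otimes>\<^sub>M PiM (block k) (\<lambda>_. count_space UNIV)) cfg_space"
  unfolding graft_def
proof (rule measurable_restrict)
  fix i
  show "(\<lambda>z. if i \<in> past (k - 1) then fst z i else if i \<in> block k then snd z i else 0)
     \<in> measurable (PiM (past (k - 1)) (\<lambda>_. count_space UNIV) \<Otimes>\<^sub>M PiM (block k) (\<lambda>_. count_space UNIV)) (count_space UNIV)"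
    by (cases "i \<in> past (k - 1)"; cases "i \<in> block k") simp_all
qed

locale inar_process = prob_space M for M :: "'a measure" +
  fixes Y0 :: "'a \<Rightarrow> nat" and eps :: "nat \<Rightarrow> 'a \<Rightarrow> nat" and xi :: "nat \<Rightarrow> nat \<Rightarrow> 'a \<Rightarrow> nat"
    and \<alpha> :: real and \<mu> :: real and s1 s2 \<theta>1 \<theta>2 :: nat
  assumes alpha: "\<alpha> \<in> {0<..<1}"
    and s1: "s1 \<ge> 1" and s2: "s2 \<ge> 1" and s12: "s1 \<noteq> s2" and th1: "\<theta>1 \<ge> 1" and th2: "\<theta>2 \<ge> 1"
    and indep: "indep_vars (\<lambda>_. count_space UNIV) (inar_family Y0 eps xi) inar_index_set"
    and eps_ident: "\<And>k. k \<ge> 1 \<Longrightarrow> distr M (count_space UNIV) (eps k) = distr M (count_space UNIV) (eps 1)"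
    and eps_sq: "integrable M (\<lambda>\<omega>. (real (eps 1 \<omega>))\<^sup>2)"
    and eps_nz: "measure M {\<omega> \<in> space M. eps 1 \<omega> \<noteq> 0} > 0"
    and mu_def: "\<mu> = integral\<^sup>L M (\<lambda>\<omega>. real (eps 1 \<omega>))"
    and xi_bern: "\<And>k j. k \<ge> 1 \<Longrightarrow> j \<ge> 1 \<Longrightarrow>
        distr M (count_space UNIV) (xi k j) = measure_pmf (map_pmf (\<lambda>b. if b then 1 else 0) (bernoulli_pmf \<alpha>))"
    and Y0_sq: "integrable M (\<lambda>\<omega>. (real (Y0 \<omega>))\<^sup>2)"
begin

abbreviation X where "X \<equiv> inar_family Y0 eps xi"

definition cfg :: "'a \<Rightarrow> inar_idx \<Rightarrow> nat" where
  "cfg \<omega> = restrict (\<lambda>i. X i \<omega>) inar_index_set"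

abbreviation Yc where "Yc \<equiv> Ycfg s1 s2 \<theta>1 \<theta>2"

abbreviation Y where "Y k \<omega> \<equiv> Yc k (cfg \<omega>)"

lemma X_measurable: "i \<in> inar_index_set \<Longrightarrow> X i \<in> measurable M (count_space UNIV)"
  using indep unfolding indep_vars_def by auto

lemma cfg_measurable[measurable]: "cfg \<in> measurable M cfg_space"
  unfolding cfg_def by (rule measurable_restrict) (rule X_measurable)

lemma xi_measurable[measurable]: "k \<ge> 1 \<Longrightarrow> j \<ge> 1 \<Longrightarrow> xi k j \<in> measurable M (count_space UNIV)"
  using X_measurable[of "IXi k j"] by (simp add: inar_index_set_def)

lemma eps_measurable[measurable]: "k \<ge> 1 \<Longrightarrow> eps k \<in> measurable M (count_space UNIV)"
  using X_measurable[of "IEps k"] by (simp add: inar_index_set_def)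

lemma cfg_Y0: "cfg \<omega> IY0 = Y0 \<omega>"
  by (simp add: cfg_def inar_index_set_def)

lemma cfg_xi: "k \<ge> 1 \<Longrightarrow> l \<ge> 1 \<Longrightarrow> cfg \<omega> (IXi k l) = xi k l \<omega>"
  by (simp add: cfg_def inar_index_set_def)

lemma cfg_eps: "k \<ge> 1 \<Longrightarrow> cfg \<omega> (IEps k) = eps k \<omega>"
  by (simp add: cfg_def inar_index_set_def)

lemma inar_Y_eq: "inar_Y Y0 eps xi s1 s2 \<theta>1 \<theta>2 k \<omega> = Y k \<omega>"
  unfolding inar_Y_Ycfg
  by (rule determined_byD[OF Ycfg_determined]) (use past_subset in \<open>auto simp: cfg_def\<close>)

lemma Y_measurable[measurable]: "(\<lambda>\<omega>. Y k \<omega>) \<in> measurable M (count_space UNIV)"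
  using measurable_compose[OF cfg_measurable measurable_Ycfg] by (simp add: comp_def)

lemma real_Y_measurable[measurable]: "(\<lambda>\<omega>. real (Y k \<omega>)) \<in> borel_measurable M"
  using measurable_compose[OF Y_measurable, of real borel] by (simp add: comp_def)

lemma cfg_functional_measurable:
  "F \<in> borel_measurable cfg_space \<Longrightarrow> (\<lambda>\<omega>. F (cfg \<omega>)) \<in> borel_measurable M"
  using measurable_compose[OF cfg_measurable] by (simp add: comp_def)

lemma graft_decomposition:
  assumes k: "k \<ge> 1"
  defines "P \<equiv> \<lambda>\<omega>. restrict (\<lambda>i. X i \<omega>) (past (k - 1))" and "B \<equiv> \<lambda>\<omega>. restrict (\<lambda>i. X i \<omega>) (block k)"
  shows "indep_var (PiM (past (k - 1)) (\<lambda>_. count_space UNIV)) P (PiM (block k) (\<lambda>_. count_space UNIV)) B"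
    and "graft k (cfg \<omega>) (cfg \<omega>') = graft k (P \<omega>) (B \<omega>')"
  unfolding P_def B_def
  by (rule indep_var_restrict[OF indep past_block_disjoint[OF k] past_subset block_subset[OF k]])
     (rule graft_cong; use past_subset block_subset[OF k] in \<open>auto simp: cfg_def\<close>)

lemma nn_integral_graft:
  fixes F :: "(inar_idx \<Rightarrow> nat) \<Rightarrow> ennreal"
  assumes k: "k \<ge> 1" and Fm: "F \<in> borel_measurable cfg_space" and F: "determined_by (past k) F"
  shows "(\<integral>\<^sup>+\<omega>. F (cfg \<omega>) \<partial>M) = (\<integral>\<^sup>+\<omega>. \<integral>\<^sup>+\<omega>'. F (graft k (cfg \<omega>) (cfg \<omega>')) \<partial>M \<partial>M)"
proof -
  note dec = graft_decomposition[OF k]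
  have h: "(\<lambda>z. F (graft k (fst z) (snd z))) \<in> borel_measurable
      (PiM (past (k - 1)) (\<lambda>_. count_space UNIV) \<Otimes>\<^sub>M PiM (block k) (\<lambda>_. count_space UNIV))"
    using measurable_compose[OF measurable_graft Fm] by (simp add: comp_def)
  have "(\<integral>\<^sup>+\<omega>. F (cfg \<omega>) \<partial>M) = (\<integral>\<^sup>+\<omega>. F (graft k (cfg \<omega>) (cfg \<omega>)) \<partial>M)"
    by (simp add: graft_diag[OF k F])
  also have "\<dots> = (\<integral>\<^sup>+\<omega>. \<integral>\<^sup>+\<omega>'. F (graft k (cfg \<omega>) (cfg \<omega>')) \<partial>M \<partial>M)"
    unfolding dec(2) using indep_var_nn_integral_split[OF dec(1) h] by simp
  finally show ?thesis .
qed

lemma integral_graft: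
  fixes F :: "(inar_idx \<Rightarrow> nat) \<Rightarrow> real"
  assumes k: "k \<ge> 1" and Fm: "F \<in> borel_measurable cfg_space" and F: "determined_by (past k) F"
    and Fi: "integrable M (\<lambda>\<omega>. F (cfg \<omega>))"
  shows "(\<integral>\<omega>. F (cfg \<omega>) \<partial>M) = (\<integral>\<omega>. \<integral>\<omega>'. F (graft k (cfg \<omega>) (cfg \<omega>')) \<partial>M \<partial>M)"
proof -
  note dec = graft_decomposition[OF k]
  have h: "(\<lambda>z. F (graft k (fst z) (snd z))) \<in> borel_measurable
      (PiM (past (k - 1)) (\<lambda>_. count_space UNIV) \<Otimes>\<^sub>M PiM (block k) (\<lambda>_. count_space UNIV))"
    using measurable_compose[OF measurable_graft Fm] by (simp add: comp_def)
  have diag: "F (cfg \<omega>) = F (graft k (cfg \<omega>) (cfg \<omega>))" for \<omega>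
    by (simp add: graft_diag[OF k F])
  have "(\<integral>\<omega>. F (cfg \<omega>) \<partial>M) = (\<integral>\<omega>. F (graft k (cfg \<omega>) (cfg \<omega>)) \<partial>M)"
    by (simp only: diag[symmetric])
  also have "\<dots> = (\<integral>\<omega>. \<integral>\<omega>'. F (graft k (cfg \<omega>) (cfg \<omega>')) \<partial>M \<partial>M)"
    unfolding dec(2) using indep_var_integral_split[OF dec(1) h] Fi diag dec(2) by simp
  finally show ?thesis .
qed

lemma xi_expectation:
  fixes g :: "nat \<Rightarrow> real"
  assumes "k \<ge> 1" "j \<ge> 1"
  shows "integrable M (\<lambda>\<omega>. g (xi k j \<omega>))" and "(\<integral>\<omega>. g (xi k j \<omega>) \<partial>M) = \<alpha> * g 1 + (1 - \<alpha>) * g 0"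
proof -
  have m: "xi k j \<in> measurable M (count_space UNIV)" using assms by simp
  have d: "distr M (count_space UNIV) (xi k j) = measure_pmf (map_pmf (\<lambda>b. if b then 1 else 0) (bernoulli_pmf \<alpha>))"
    using xi_bern assms by blast
  have "integrable (distr M (count_space UNIV) (xi k j)) g"
    unfolding d by (rule integrable_measure_pmf_finite) simp
  then show "integrable M (\<lambda>\<omega>. g (xi k j \<omega>))"
    using integrable_distr_eq[OF m, of g] by simp
  have "(\<integral>\<omega>. g (xi k j \<omega>) \<partial>M) = (\<integral>x. g x \<partial>distr M (count_space UNIV) (xi k j))"
    using integral_distr[OF m, of g] by simp
  also have "\<dots> = \<alpha> * g 1 + (1 - \<alpha>) * g 0"
    unfolding d using alpha by simp
  finally show "(\<integral>\<omega>. g (xi k j \<omega>) \<partial>M) = \<alpha> * g 1 + (1 - \<alpha>) * g 0" .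
qed

lemma eps_same_law:
  fixes g :: "nat \<Rightarrow> real"
  assumes "k \<ge> 1"
  shows "integrable M (\<lambda>\<omega>. g (eps k \<omega>)) \<longleftrightarrow> integrable M (\<lambda>\<omega>. g (eps 1 \<omega>))"
    and "(\<integral>\<omega>. g (eps k \<omega>) \<partial>M) = (\<integral>\<omega>. g (eps 1 \<omega>) \<partial>M)"
proof -
  have m: "eps k \<in> measurable M (count_space UNIV)" and m1: "eps 1 \<in> measurable M (count_space UNIV)"
    using assms by simp_all
  have d: "distr M (count_space UNIV) (eps k) = distr M (count_space UNIV) (eps 1)"
    using eps_ident assms by blast
  show "integrable M (\<lambda>\<omega>. g (eps k \<omega>)) \<longleftrightarrow> integrable M (\<lambda>\<omega>. g (eps 1 \<omega>))"
    using integrable_distr_eq[OF m, of g] integrable_distr_eq[OF m1, of g] d by simp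
  show "(\<integral>\<omega>. g (eps k \<omega>) \<partial>M) = (\<integral>\<omega>. g (eps 1 \<omega>) \<partial>M)"
    using integral_distr[OF m, of g] integral_distr[OF m1, of g] d by simp
qed

lemma eps_integrable: "k \<ge> 1 \<Longrightarrow> integrable M (\<lambda>\<omega>. real (eps k \<omega>))"
proof -
  have "integrable M (\<lambda>\<omega>. real (eps 1 \<omega>))"
    by (rule square_integrable_imp_integrable[OF _ eps_sq])
      (use measurable_compose[OF eps_measurable[of 1], of real borel] in \<open>simp add: comp_def\<close>)
  then show "k \<ge> 1 \<Longrightarrow> ?thesis" using eps_same_law(1)[of k real] by simp
qed

lemma eps_sq_integrable: "k \<ge> 1 \<Longrightarrow> integrable M (\<lambda>\<omega>. (real (eps k \<omega>))\<^sup>2)"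
  using eps_same_law(1)[of k "\<lambda>x. (real x)\<^sup>2"] eps_sq by simp

lemma eps_mean: "k \<ge> 1 \<Longrightarrow> (\<integral>\<omega>. real (eps k \<omega>) \<partial>M) = \<mu>"
  using eps_same_law(2)[of k real] mu_def by simp

lemma mu_nonneg: "\<mu> \<ge> 0"
  unfolding mu_def by (rule integral_nonneg_AE) simp

definition var_eps :: real where
  "var_eps = (\<integral>\<omega>. (real (eps 1 \<omega>))\<^sup>2 \<partial>M) - \<mu>\<^sup>2"

lemma eps_second_moment: "k \<ge> 1 \<Longrightarrow> (\<integral>\<omega>. (real (eps k \<omega>))\<^sup>2 \<partial>M) = var_eps + \<mu>\<^sup>2"
  using eps_same_law(2)[of k "\<lambda>x. (real x)\<^sup>2"] var_eps_def by simp

lemma indep_coordinates_integral: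
  fixes g h :: "nat \<Rightarrow> real"
  assumes "a \<in> inar_index_set" "b \<in> inar_index_set" "a \<noteq> b"
    and "integrable M (\<lambda>\<omega>. g (X a \<omega>))" "integrable M (\<lambda>\<omega>. h (X b \<omega>))"
  shows "(\<integral>\<omega>. g (X a \<omega>) * h (X b \<omega>) \<partial>M) = (\<integral>\<omega>. g (X a \<omega>) \<partial>M) * (\<integral>\<omega>. h (X b \<omega>) \<partial>M)"
proof -
  have pair: "indep_var (PiM {a} (\<lambda>_. count_space UNIV)) (\<lambda>\<omega>. restrict (\<lambda>i. X i \<omega>) {a})
                        (PiM {b} (\<lambda>_. count_space UNIV)) (\<lambda>\<omega>. restrict (\<lambda>i. X i \<omega>) {b})"
    by (rule indep_var_restrict[OF indep]) (use assms in auto)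
  have ga: "(\<lambda>f. g (f a)) \<in> borel_measurable (PiM {a} (\<lambda>_. count_space UNIV))"
  proof -
    have "(\<lambda>f. f a) \<in> measurable (PiM {a} (\<lambda>_. count_space UNIV)) (count_space UNIV)"
      by (rule measurable_component_singleton) simp
    then show ?thesis using measurable_compose[of _ _ "count_space UNIV" g borel] by auto
  qed
  have hb: "(\<lambda>f. h (f b)) \<in> borel_measurable (PiM {b} (\<lambda>_. count_space UNIV))"
  proof -
    have "(\<lambda>f. f b) \<in> measurable (PiM {b} (\<lambda>_. count_space UNIV)) (count_space UNIV)"
      by (rule measurable_component_singleton) simp
    then show ?thesis using measurable_compose[of _ _ "count_space UNIV" h borel] by auto
  qed
  have "indep_var borel (\<lambda>\<omega>. g (X a \<omega>)) borel (\<lambda>\<omega>. h (X b \<omega>))"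
    using indep_var_compose[OF pair ga hb] by (simp add: comp_def)
  from indep_var_lebesgue_integral[OF this assms(4,5)] show ?thesis .
qed

definition innov :: "nat \<Rightarrow> nat \<Rightarrow> 'a \<Rightarrow> real" where
  "innov k y \<omega> = (\<Sum>l\<in>{1..y}. real (xi k l \<omega>)) - \<alpha> * real y + real (eps k \<omega>) - \<mu>"

definition innov_term :: "nat \<Rightarrow> nat \<Rightarrow> 'a \<Rightarrow> real" where
  "innov_term k a \<omega> = (if a = 0 then real (eps k \<omega>) - \<mu> else real (xi k a \<omega>) - \<alpha>)"

lemma innov_as_sum: "innov k y = (\<lambda>\<omega>. \<Sum>a\<in>{0..y}. innov_term k a \<omega>)"
proof
  fix \<omega>
  have "(\<Sum>a\<in>{0..y}. innov_term k a \<omega>) = innov_term k 0 \<omega> + (\<Sum>a\<in>{1..y}. innov_term k a \<omega>)"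
    by (simp add: sum.atLeast_Suc_atMost)
  also have "(\<Sum>a\<in>{1..y}. innov_term k a \<omega>) = (\<Sum>a\<in>{1..y}. real (xi k a \<omega>) - \<alpha>)"
    by (rule sum.cong) (auto simp: innov_term_def)
  finally show "innov k y \<omega> = (\<Sum>a\<in>{0..y}. innov_term k a \<omega>)"
    by (simp add: innov_def innov_term_def sum_subtractf)
qed

lemma innov_term_as_X:
  "innov_term k a \<omega> = (\<lambda>x. real x - (if a = 0 then \<mu> else \<alpha>)) (X (if a = 0 then IEps k else IXi k a) \<omega>)"
  unfolding innov_term_def by simp

lemma innov_term_measurable[measurable]:
  assumes "k \<ge> 1" shows "innov_term k a \<in> borel_measurable M"
proof -
  have "X (if a = 0 then IEps k else IXi k a) \<in> measurable M (count_space UNIV)"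
    using assms by (intro X_measurable) (auto simp: inar_index_set_def)
  moreover have "innov_term k a = (\<lambda>x. real x - (if a = 0 then \<mu> else \<alpha>)) \<circ> X (if a = 0 then IEps k else IXi k a)"
    by (auto simp: fun_eq_iff innov_term_as_X)
  ultimately show ?thesis by (simp add: measurable_comp)
qed

lemma innov_term_integrable: "k \<ge> 1 \<Longrightarrow> integrable M (innov_term k a)"
  unfolding innov_term_def using eps_integrable[of k] xi_expectation(1)[of k a "\<lambda>x. real x - \<alpha>"]
  by (cases "a = 0") auto

lemma innov_term_mean: "k \<ge> 1 \<Longrightarrow> (\<integral>\<omega>. innov_term k a \<omega> \<partial>M) = 0"
  unfolding innov_term_def using eps_integrable[of k] eps_mean[of k] xi_expectation(2)[of k a "\<lambda>x. real x - \<alpha>"]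
  by (cases "a = 0") (auto simp: prob_space)

lemma innov_term_second_moment:
  assumes k: "k \<ge> 1"
  shows "integrable M (\<lambda>\<omega>. (innov_term k a \<omega>)\<^sup>2)"
    and "(\<integral>\<omega>. (innov_term k a \<omega>)\<^sup>2 \<partial>M) = (if a = 0 then var_eps else \<alpha> * (1 - \<alpha>))"
proof -
  have sq: "(\<lambda>\<omega>. (innov_term k 0 \<omega>)\<^sup>2) = (\<lambda>\<omega>. (real (eps k \<omega>))\<^sup>2 - 2 * \<mu> * real (eps k \<omega>) + \<mu>\<^sup>2)"
    by (auto simp: innov_term_def power2_eq_square algebra_simps)
  have E0: "(\<integral>\<omega>. (innov_term k 0 \<omega>)\<^sup>2 \<partial>M) = var_eps"
    unfolding sq using eps_integrable[OF k] eps_sq_integrable[OF k] eps_mean[OF k] eps_second_moment[OF k]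
    by (simp add: prob_space) (simp add: power2_eq_square)
  show "integrable M (\<lambda>\<omega>. (innov_term k a \<omega>)\<^sup>2)"
  proof (cases "a = 0")
    case True
    then show ?thesis using eps_integrable[OF k] eps_sq_integrable[OF k] by (simp add: sq)
  next
    case False
    then show ?thesis using k xi_expectation(1)[of k a "\<lambda>x. (real x - \<alpha>)\<^sup>2"] by (simp add: innov_term_def)
  qed
  show "(\<integral>\<omega>. (innov_term k a \<omega>)\<^sup>2 \<partial>M) = (if a = 0 then var_eps else \<alpha> * (1 - \<alpha>))"
  proof (cases "a = 0")
    case False
    then show ?thesis using k xi_expectation(2)[of k a "\<lambda>x. (real x - \<alpha>)\<^sup>2"]
      by (simp add: innov_term_def power2_eq_square algebra_simps)
  qed (simp add: E0)
qed

lemma innov_term_orthogonal: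
  assumes k: "k \<ge> 1" and ab: "a \<noteq> b"
  shows "(\<integral>\<omega>. innov_term k a \<omega> * innov_term k b \<omega> \<partial>M) = 0"
proof -
  let ?ia = "if a = 0 then IEps k else IXi k a" and ?ib = "if b = 0 then IEps k else IXi k b"
  let ?ga = "\<lambda>x. real x - (if a = 0 then \<mu> else \<alpha>)" and ?gb = "\<lambda>x. real x - (if b = 0 then \<mu> else \<alpha>)"
  have i: "?ia \<in> inar_index_set" "?ib \<in> inar_index_set" "?ia \<noteq> ?ib"
    using k ab by (auto simp: inar_index_set_def)
  have eq: "innov_term k c = (\<lambda>\<omega>. real (X (if c = 0 then IEps k else IXi k c) \<omega>) - (if c = 0 then \<mu> else \<alpha>))"
    for c by (rule ext) (rule innov_term_as_X)
  have "(\<integral>\<omega>. innov_term k a \<omega> * innov_term k b \<omega> \<partial>M) = (\<integral>\<omega>. ?ga (X ?ia \<omega>) * ?gb (X ?ib \<omega>) \<partial>M)"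
    unfolding eq ..
  also have "\<dots> = (\<integral>\<omega>. ?ga (X ?ia \<omega>) \<partial>M) * (\<integral>\<omega>. ?gb (X ?ib \<omega>) \<partial>M)"
    using innov_term_integrable[OF k, of a] innov_term_integrable[OF k, of b] unfolding eq
    by (rule indep_coordinates_integral[OF i])
  also have "\<dots> = 0"
    using innov_term_mean[OF k, of a] unfolding eq by simp
  finally show ?thesis .
qed

lemma innov_integrable: "k \<ge> 1 \<Longrightarrow> integrable M (innov k y)"
  unfolding innov_as_sum by (intro Bochner_Integration.integrable_sum innov_term_integrable)

lemma innov_mean: "k \<ge> 1 \<Longrightarrow> (\<integral>\<omega>. innov k y \<omega> \<partial>M) = 0"
  unfolding innov_as_sum using innov_term_integrable innov_term_mean by (simp add: integral_sum)

lemma innov_second_moment: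
  assumes k: "k \<ge> 1"
  shows "integrable M (\<lambda>\<omega>. (innov k y \<omega>)\<^sup>2)"
    and "(\<integral>\<omega>. (innov k y \<omega>)\<^sup>2 \<partial>M) = var_eps + real y * (\<alpha> * (1 - \<alpha>))"
proof -
  note pyth = orthogonal_sum_square[of "{0..y}" "innov_term k", OF _ innov_term_measurable[OF k]
      innov_term_second_moment(1)[OF k] innov_term_orthogonal[OF k]]
  show "integrable M (\<lambda>\<omega>. (innov k y \<omega>)\<^sup>2)" unfolding innov_as_sum using pyth(1) by simp
  have "(\<integral>\<omega>. (innov k y \<omega>)\<^sup>2 \<partial>M) = (\<Sum>a\<in>{0..y}. if a = 0 then var_eps else \<alpha> * (1 - \<alpha>))"
    unfolding innov_as_sum using pyth(2) innov_term_second_moment(2)[OF k] by simp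
  also have "\<dots> = var_eps + (\<Sum>a\<in>{1..y}. \<alpha> * (1 - \<alpha>))"
    by (simp add: sum.atLeast_Suc_atMost)
  finally show "(\<integral>\<omega>. (innov k y \<omega>)\<^sup>2 \<partial>M) = var_eps + real y * (\<alpha> * (1 - \<alpha>))" by simp
qed

lemma var_eps_nonneg: "var_eps \<ge> 0"
  using innov_second_moment(2)[of 1 0] integral_nonneg_AE[of "\<lambda>\<omega>. (innov 1 0 \<omega>)\<^sup>2" M] by simp

lemma innov_shift_second_moment:
  assumes k: "k \<ge> 1"
  shows "integrable M (\<lambda>\<omega>. (innov k y \<omega> + b)\<^sup>2)"
    and "(\<integral>\<omega>. (innov k y \<omega> + b)\<^sup>2 \<partial>M) = var_eps + real y * (\<alpha> * (1 - \<alpha>)) + b\<^sup>2"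
proof -
  have e: "(\<lambda>\<omega>. (innov k y \<omega> + b)\<^sup>2) = (\<lambda>\<omega>. (innov k y \<omega>)\<^sup>2 + 2 * b * innov k y \<omega> + b\<^sup>2)"
    by (auto simp: power2_eq_square algebra_simps)
  show "integrable M (\<lambda>\<omega>. (innov k y \<omega> + b)\<^sup>2)"
    unfolding e using innov_second_moment(1)[OF k] innov_integrable[OF k] by simp
  show "(\<integral>\<omega>. (innov k y \<omega> + b)\<^sup>2 \<partial>M) = var_eps + real y * (\<alpha> * (1 - \<alpha>)) + b\<^sup>2"
    unfolding e using innov_second_moment[OF k] innov_integrable[OF k] innov_mean[OF k] by (simp add: prob_space)
qed

text \<open>G is a square-integrable martingale difference sequence for the filtration of
  the process: G k only reads the past up to time k, and averaging it over a fresh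
  time-k block (i.e. conditioning on the past before k) gives zero.\<close>
definition martingale_diff :: "(nat \<Rightarrow> (inar_idx \<Rightarrow> nat) \<Rightarrow> real) \<Rightarrow> bool" where
  "martingale_diff G \<longleftrightarrow> (\<forall>k\<ge>1. G k \<in> borel_measurable cfg_space \<and> determined_by (past k) (G k)
      \<and> integrable M (\<lambda>\<omega>. (G k (cfg \<omega>))\<^sup>2)
      \<and> (\<forall>\<omega>\<in>space M. (\<integral>\<omega>'. G k (graft k (cfg \<omega>) (cfg \<omega>')) \<partial>M) = 0))"

lemma martingale_diffI:
  assumes "\<And>k. k \<ge> 1 \<Longrightarrow> G k \<in> borel_measurable cfg_space"
    and "\<And>k. k \<ge> 1 \<Longrightarrow> determined_by (past k) (G k)"
    and "\<And>k. k \<ge> 1 \<Longrightarrow> integrable M (\<lambda>\<omega>. (G k (cfg \<omega>))\<^sup>2)"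
    and "\<And>k \<omega>. k \<ge> 1 \<Longrightarrow> (\<integral>\<omega>'. G k (graft k (cfg \<omega>) (cfg \<omega>')) \<partial>M) = 0"
  shows "martingale_diff G"
  using assms unfolding martingale_diff_def by blast

lemma martingale_diffD:
  assumes "martingale_diff G" "k \<ge> 1"
  shows "G k \<in> borel_measurable cfg_space" and "determined_by (past k) (G k)"
    and "integrable M (\<lambda>\<omega>. (G k (cfg \<omega>))\<^sup>2)"
    and "\<And>\<omega>. \<omega> \<in> space M \<Longrightarrow> (\<integral>\<omega>'. G k (graft k (cfg \<omega>) (cfg \<omega>')) \<partial>M) = 0"
  using assms unfolding martingale_diff_def by blast+

lemma martingale_diff_orthogonal:
  fixes H :: "(inar_idx \<Rightarrow> nat) \<Rightarrow> real"
  assumes G: "martingale_diff G" and k: "k \<ge> 1"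
    and Hm[measurable]: "H \<in> borel_measurable cfg_space" and H: "determined_by (past (k - 1)) H"
    and Hsq: "integrable M (\<lambda>\<omega>. (H (cfg \<omega>))\<^sup>2)"
  shows "(\<integral>\<omega>. G k (cfg \<omega>) * H (cfg \<omega>) \<partial>M) = 0"
proof -
  note Gk = martingale_diffD[OF G k]
  have [measurable]: "G k \<in> borel_measurable cfg_space" by (rule Gk(1))
  have H_graft: "H (graft k f g) = H f" for f g
    by (rule determined_byD[OF H]) (simp add: graft_past)
  have "(\<integral>\<omega>. G k (cfg \<omega>) * H (cfg \<omega>) \<partial>M)
      = (\<integral>\<omega>. \<integral>\<omega>'. G k (graft k (cfg \<omega>) (cfg \<omega>')) * H (graft k (cfg \<omega>) (cfg \<omega>')) \<partial>M \<partial>M)"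
  proof (rule integral_graft[OF k])
    show "determined_by (past k) (\<lambda>f. G k f * H f)"
      using Gk(2) determined_by_past_mono[OF _ H, of k] by (intro determined_by_mult) auto
    show "integrable M (\<lambda>\<omega>. G k (cfg \<omega>) * H (cfg \<omega>))"
      using Gk(3) Hsq cfg_functional_measurable[OF Gk(1)] cfg_functional_measurable[OF Hm]
      by (intro integrable_mult_of_square_integrable)
  qed measurable
  also have "\<dots> = (\<integral>\<omega>. (\<integral>\<omega>'. G k (graft k (cfg \<omega>) (cfg \<omega>')) \<partial>M) * H (cfg \<omega>) \<partial>M)"
    by (simp add: H_graft)
  also have "\<dots> = 0"
    by (rule integral_eq_zero_AE) (use Gk(4) in auto)
  finally show ?thesis .
qed

lemma martingale_diff_sum_second_moment:
  assumes G: "martingale_diff G"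
  shows "integrable M (\<lambda>\<omega>. (\<Sum>k\<in>{1..n}. G k (cfg \<omega>))\<^sup>2)"
    and "(\<integral>\<omega>. (\<Sum>k\<in>{1..n}. G k (cfg \<omega>))\<^sup>2 \<partial>M) = (\<Sum>k\<in>{1..n}. \<integral>\<omega>. (G k (cfg \<omega>))\<^sup>2 \<partial>M)"
proof -
  have later_orth: "(\<integral>\<omega>. G b (cfg \<omega>) * G a (cfg \<omega>) \<partial>M) = 0" if ab: "1 \<le> a" "a < b" for a b
  proof (rule martingale_diff_orthogonal[OF G])
    show "1 \<le> b" using ab by simp
    show "G a \<in> borel_measurable cfg_space" "integrable M (\<lambda>\<omega>. (G a (cfg \<omega>))\<^sup>2)"
      using martingale_diffD(1,3)[OF G ab(1)] by simp_all
    show "determined_by (past (b - 1)) (G a)"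
      using ab by (intro determined_by_past_mono[OF _ martingale_diffD(2)[OF G ab(1)]]) simp
  qed
  have orth: "(\<integral>\<omega>. G a (cfg \<omega>) * G b (cfg \<omega>) \<partial>M) = 0" if "a \<in> {1..n}" "b \<in> {1..n}" "a \<noteq> b" for a b
  proof (cases "a < b")
    case True
    then show ?thesis using later_orth[of a b] that by (simp add: mult.commute)
  next
    case False
    then show ?thesis using later_orth[of b a] that by simp
  qed
  have Gm: "(\<lambda>\<omega>. G k (cfg \<omega>)) \<in> borel_measurable M" if "k \<in> {1..n}" for k
    using that by (intro cfg_functional_measurable martingale_diffD(1)[OF G]) simp
  have Gsq: "integrable M (\<lambda>\<omega>. (G k (cfg \<omega>))\<^sup>2)" if "k \<in> {1..n}" for k
    using that by (intro martingale_diffD(3)[OF G]) simp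
  note pyth = orthogonal_sum_square[OF finite_atLeastAtMost Gm Gsq orth]
  show "integrable M (\<lambda>\<omega>. (\<Sum>k\<in>{1..n}. G k (cfg \<omega>))\<^sup>2)" by (rule pyth(1))
  show "(\<integral>\<omega>. (\<Sum>k\<in>{1..n}. G k (cfg \<omega>))\<^sup>2 \<partial>M) = (\<Sum>k\<in>{1..n}. \<integral>\<omega>. (G k (cfg \<omega>))\<^sup>2 \<partial>M)"
    by (rule pyth(2))
qed

lemma martingale_diff_partial_sum:
  assumes G: "martingale_diff G"
  shows "(\<lambda>f. \<Sum>k\<in>{1..n}. G k f) \<in> borel_measurable cfg_space"
    and "determined_by (past n) (\<lambda>f. \<Sum>k\<in>{1..n}. G k f)"
proof -
  show "(\<lambda>f. \<Sum>k\<in>{1..n}. G k f) \<in> borel_measurable cfg_space"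
    using martingale_diffD(1)[OF G] by (intro borel_measurable_sum) auto
  show "determined_by (past n) (\<lambda>f. \<Sum>k\<in>{1..n}. G k f)"
  proof (rule determined_byI)
    fix f g :: "inar_idx \<Rightarrow> nat" assume fg: "\<And>i. i \<in> past n \<Longrightarrow> f i = g i"
    have "G k f = G k g" if k: "k \<in> {1..n}" for k
    proof (rule determined_byD[OF determined_by_past_mono])
      show "k \<le> n" "determined_by (past k) (G k)" using k martingale_diffD(2)[OF G, of k] by auto
    qed (rule fg)
    then show "(\<Sum>k\<in>{1..n}. G k f) = (\<Sum>k\<in>{1..n}. G k g)" by (rule sum.cong[OF refl])
  qed
qed

lemma martingale_diff_maximal_inequality:
  assumes G: "martingale_diff G" and lam: "lam > 0"
  shows "prob {\<omega>\<in>space M. \<exists>k\<le>N. lam \<le> \<bar>\<Sum>i\<in>{1..k}. G i (cfg \<omega>)\<bar>}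
      \<le> (\<Sum>k\<in>{1..N}. \<integral>\<omega>. (G k (cfg \<omega>))\<^sup>2 \<partial>M) / lam\<^sup>2"
proof -
  define S where "S n f = (\<Sum>k\<in>{1..n}. G k f)" for n f
  have Sm[measurable]: "S n \<in> borel_measurable cfg_space" for n
    unfolding S_def by (rule martingale_diff_partial_sum(1)[OF G])
  have S_past: "determined_by (past n) (S n)" for n
    unfolding S_def[abs_def] by (rule martingale_diff_partial_sum(2)[OF G])
  have S_sq: "integrable M (\<lambda>\<omega>. (S k (cfg \<omega>))\<^sup>2)" for k
    unfolding S_def by (rule martingale_diff_sum_second_moment(1)[OF G])
  have "prob {\<omega>\<in>space M. \<exists>k\<le>N. lam \<le> \<bar>S k (cfg \<omega>)\<bar>} \<le> (\<integral>\<omega>. (S N (cfg \<omega>))\<^sup>2 \<partial>M) / lam\<^sup>2"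
  proof (rule kolmogorov_maximal_inequality[OF lam _ S_sq])
    show "(\<lambda>\<omega>. S k (cfg \<omega>)) \<in> borel_measurable M" for k
      by (rule cfg_functional_measurable[OF Sm])
    fix k j :: nat assume kj: "k < j" "j \<le> N"
    define A where "A f = (if lam \<le> \<bar>S k f\<bar> \<and> (\<forall>i<k. \<bar>S i f\<bar> < lam) then 1 else 0 :: real)" for f
    have Am[measurable]: "A \<in> borel_measurable cfg_space"
      unfolding A_def by measurable
    have A_past: "determined_by (past (j - 1)) (\<lambda>f. S k f * A f)"
    proof (rule determined_byI)
      fix f g :: "inar_idx \<Rightarrow> nat" assume fg: "\<And>i. i \<in> past (j - 1) \<Longrightarrow> f i = g i"
      have "S i f = S i g" if "i \<le> k" for i
      proof (rule determined_byD[OF determined_by_past_mono[OF _ S_past]])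
        show "i \<le> j - 1" using that kj by simp
      qed (rule fg)
      then show "S k f * A f = S k g * A g" unfolding A_def by simp
    qed
    have SA_sq: "integrable M (\<lambda>\<omega>. (S k (cfg \<omega>) * A (cfg \<omega>))\<^sup>2)"
    proof (rule Bochner_Integration.integrable_bound[OF S_sq])
      show "AE \<omega> in M. norm ((S k (cfg \<omega>) * A (cfg \<omega>))\<^sup>2) \<le> norm ((S k (cfg \<omega>))\<^sup>2)"
        unfolding A_def by simp
    qed (simp add: cfg_functional_measurable)
    have "(\<integral>\<omega>. G j (cfg \<omega>) * (S k (cfg \<omega>) * A (cfg \<omega>)) \<partial>M) = 0"
      by (rule martingale_diff_orthogonal[OF G _ _ A_past SA_sq]) (use kj in simp_all)
    moreover have "G j f = S j f - S (j - 1) f" for f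
      using kj unfolding S_def by (cases j) (auto simp: sum.cl_ivl_Suc)
    moreover have "A (cfg \<omega>) = indicator (first_passage M (\<lambda>n \<omega>. S n (cfg \<omega>)) lam k) \<omega>"
      if "\<omega> \<in> space M" for \<omega>
      using that by (simp add: A_def first_passage_def indicator_def)
    ultimately show "(\<integral>\<omega>. (S j (cfg \<omega>) - S (j - 1) (cfg \<omega>))
        * (S k (cfg \<omega>) * indicator (first_passage M (\<lambda>n \<omega>. S n (cfg \<omega>)) lam k) \<omega>) \<partial>M) = 0"
      by (simp cong: Bochner_Integration.integral_cong)
  qed
  also have "\<dots> = (\<Sum>k\<in>{1..N}. \<integral>\<omega>. (G k (cfg \<omega>))\<^sup>2 \<partial>M) / lam\<^sup>2"
    unfolding S_def martingale_diff_sum_second_moment(2)[OF G] ..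
  finally show ?thesis unfolding S_def .
qed

lemma martingale_diff_slln:
  assumes G: "martingale_diff G"
    and summ: "summable (\<lambda>m. (\<Sum>k\<in>{1..2^(m+1)}. \<integral>\<omega>. (G k (cfg \<omega>))\<^sup>2 \<partial>M) / 4^m)"
  shows "AE \<omega> in M. (\<lambda>n. (\<Sum>k\<in>{1..n}. G k (cfg \<omega>)) / real n) \<longlonglongrightarrow> 0"
proof (rule slln_from_dyadic_maxima)
  show "(\<lambda>\<omega>. \<Sum>k\<in>{1..n}. G k (cfg \<omega>)) \<in> borel_measurable M" for n
    using cfg_functional_measurable[OF martingale_diff_partial_sum(1)[OF G]] .
  fix \<delta> :: real assume \<delta>: "\<delta> > 0"
  have "prob {\<omega>\<in>space M. \<exists>k\<le>2^(m+1). \<delta> * 2^m \<le> \<bar>\<Sum>i\<in>{1..k}. G i (cfg \<omega>)\<bar>}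
      \<le> (1 / \<delta>\<^sup>2) * ((\<Sum>k\<in>{1..2^(m+1)}. \<integral>\<omega>. (G k (cfg \<omega>))\<^sup>2 \<partial>M) / 4^m)" for m
  proof -
    have "(4::real)^m = 2^m * 2^m" by (simp flip: power_mult_distrib)
    then have "(\<delta> * 2^m)\<^sup>2 = \<delta>\<^sup>2 * (4::real)^m"
      by (simp add: power2_eq_square)
    then show ?thesis
      using martingale_diff_maximal_inequality[OF G, of "\<delta> * 2^m" "2^(m+1)"] \<delta> by simp
  qed
  then show "summable (\<lambda>m. prob {\<omega>\<in>space M. \<exists>k\<le>2^(m+1). \<delta> * 2^m \<le> \<bar>\<Sum>i\<in>{1..k}. G i (cfg \<omega>)\<bar>})"
    by (intro summable_comparison_test'[OF summable_mult[OF summ, of "1 / \<delta>\<^sup>2"], of 0]) auto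
qed

definition outlier :: "nat \<Rightarrow> nat" where
  "outlier k = (if k = s1 then \<theta>1 else 0) + (if k = s2 then \<theta>2 else 0)"

lemma outlier_le: "outlier k \<le> \<theta>1 + \<theta>2"
  unfolding outlier_def by auto

lemma outlier_at_outlier_times: "outlier s1 \<ge> 1" "outlier s2 \<ge> 1"
  unfolding outlier_def using th1 th2 by auto

lemma Yc_Suc: "Yc (Suc k) f = (\<Sum>l\<in>{1..Yc k f}. f (IXi (Suc k) l)) + f (IEps (Suc k)) + outlier (Suc k)"
  by (simp add: outlier_def)

lemma Y_ge_eps_outlier: "k \<ge> 1 \<Longrightarrow> Y k \<omega> \<ge> eps k \<omega> + outlier k"
  by (cases k) (auto simp: Yc_Suc cfg_eps simp del: Ycfg.simps)

lemma Yc_graft: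
  assumes k: "k \<ge> 1"
  shows "Yc k (graft k f g) = (\<Sum>l\<in>{1..Yc (k - 1) f}. g (IXi k l)) + g (IEps k) + outlier k"
proof -
  obtain k' where k': "k = Suc k'" using k by (cases k) auto
  have "Yc k' (graft k f g) = Yc k' f"
    by (rule determined_byD[OF Ycfg_determined]) (simp add: graft_past k')
  then show ?thesis using k unfolding k' Yc_Suc by (simp add: graft_xi graft_eps)
qed

lemma Yc_graft_innov:
  assumes k: "k \<ge> 1"
  shows "real (Yc k (graft k f (cfg \<omega>'))) = innov k (Yc (k - 1) f) \<omega>' + (\<alpha> * real (Yc (k - 1) f) + \<mu> + real (outlier k))"
proof -
  have "(\<Sum>l\<in>{1..Yc (k - 1) f}. cfg \<omega>' (IXi k l)) = (\<Sum>l\<in>{1..Yc (k - 1) f}. xi k l \<omega>')"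
    by (rule sum.cong) (use k in \<open>auto simp: cfg_xi\<close>)
  then show ?thesis unfolding Yc_graft[OF k] innov_def using k by (simp add: cfg_eps)
qed

text \<open>Constants of the drift inequality E[Y_k^2 | Y_{k-1} = y] \<le> \<rho> y^2 + K with \<rho> < 1.\<close>
definition eta :: real where "eta = (1 - \<alpha>\<^sup>2) / 3"
definition rho :: real where "rho = (1 + eta) * \<alpha>\<^sup>2 + eta"
definition drift_const :: real where
  "drift_const = var_eps + (1 + 1 / eta) * (\<mu> + real \<theta>1 + real \<theta>2)\<^sup>2 + 1 / (4 * eta)"

lemma eta_pos: "eta > 0"
  unfolding eta_def using alpha by (simp add: power_less_one_iff abs_less_iff)

lemma rho_bounds: "0 \<le> rho" "rho < 1"
proof -
  have a2: "\<alpha>\<^sup>2 < 1" "0 \<le> \<alpha>\<^sup>2" using alpha by (auto simp: power_less_one_iff abs_less_iff)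
  show "0 \<le> rho" unfolding rho_def using eta_pos a2 by simp
  have "rho = \<alpha>\<^sup>2 + eta * (\<alpha>\<^sup>2 + 1)" unfolding rho_def by (simp add: algebra_simps)
  also have "\<dots> < \<alpha>\<^sup>2 + eta * 3" using eta_pos a2 by (intro add_strict_left_mono mult_strict_left_mono) auto
  also have "\<dots> = 1" unfolding eta_def by (simp add: field_simps)
  finally show "rho < 1" .
qed

lemma drift_const_nonneg: "drift_const \<ge> 0"
  unfolding drift_const_def using var_eps_nonneg eta_pos by simp

text \<open>The drift inequality for the conditional second moment var_eps + y \<alpha>(1-\<alpha>) +
  (\<alpha> y + \<mu> + c)^2, uniformly in the outlier c.\<close>
lemma drift_inequality:
  fixes y :: real assumes y: "y \<ge> 0" and c: "0 \<le> c" "c \<le> real \<theta>1 + real \<theta>2"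
  shows "var_eps + y * (\<alpha> * (1 - \<alpha>)) + (\<alpha> * y + \<mu> + c)\<^sup>2 \<le> rho * y\<^sup>2 + drift_const"
proof -
  have e: "eta > 0" by (rule eta_pos)
  have square: "(\<alpha> * y + (\<mu> + c))\<^sup>2 \<le> (1 + eta) * (\<alpha> * y)\<^sup>2 + (1 + 1 / eta) * (\<mu> + c)\<^sup>2"
    by (rule square_sum_weighted_bound[OF e])
  have shift: "(1 + 1 / eta) * (\<mu> + c)\<^sup>2 \<le> (1 + 1 / eta) * (\<mu> + real \<theta>1 + real \<theta>2)\<^sup>2"
    using mu_nonneg c e by (intro mult_left_mono power_mono) auto
  have variance: "y * (\<alpha> * (1 - \<alpha>)) \<le> y"
    using alpha y by (intro mult_left_le mult_le_one) auto
  have linear: "y \<le> eta * y\<^sup>2 + 1 / (4 * eta)"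
  proof -
    have "0 \<le> (2 * eta * y - 1)\<^sup>2 / (4 * eta)" using e by simp
    also have "\<dots> = eta * y\<^sup>2 + 1 / (4 * eta) - y"
      using e by (simp add: field_simps power2_eq_square)
    finally show ?thesis by simp
  qed
  have "var_eps + y * (\<alpha> * (1 - \<alpha>)) + (\<alpha> * y + \<mu> + c)\<^sup>2
      \<le> var_eps + (eta * y\<^sup>2 + 1 / (4 * eta)) + ((1 + eta) * (\<alpha> * y)\<^sup>2 + (1 + 1 / eta) * (\<mu> + real \<theta>1 + real \<theta>2)\<^sup>2)"
    using square shift variance linear by (simp add: add.assoc)
  also have "\<dots> = rho * y\<^sup>2 + drift_const"
    unfolding rho_def drift_const_def by (simp add: power_mult_distrib algebra_simps)
  finally show ?thesis .
qed

text \<open>A uniform bound C for all second moments E[Y_k^2], stable under the drift inequality.\<close>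
definition moment_bound :: real where
  "moment_bound = max (\<integral>\<omega>. (real (Y0 \<omega>))\<^sup>2 \<partial>M) (drift_const / (1 - rho))"

lemma moment_bound_nonneg: "0 \<le> moment_bound"
  unfolding moment_bound_def using drift_const_nonneg rho_bounds by (simp add: le_max_iff_disj)

lemma moment_bound_stable: "rho * moment_bound + drift_const \<le> moment_bound"
proof -
  have "drift_const = (1 - rho) * (drift_const / (1 - rho))" using rho_bounds by simp
  also have "\<dots> \<le> (1 - rho) * moment_bound"
    unfolding moment_bound_def using rho_bounds by (intro mult_left_mono) auto
  finally show ?thesis by (simp add: algebra_simps)
qed

lemma second_moment_step:
  assumes k: "k \<ge> 1"
  shows "(\<integral>\<^sup>+\<omega>. ennreal ((real (Y k \<omega>))\<^sup>2) \<partial>M) \<le> (\<integral>\<^sup>+\<omega>. ennreal (rho * (real (Y (k - 1) \<omega>))\<^sup>2 + drift_const) \<partial>M)"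
proof -
  have "(\<integral>\<^sup>+\<omega>. ennreal ((real (Y k \<omega>))\<^sup>2) \<partial>M) =
        (\<integral>\<^sup>+\<omega>. \<integral>\<^sup>+\<omega>'. ennreal ((real (Yc k (graft k (cfg \<omega>) (cfg \<omega>'))))\<^sup>2) \<partial>M \<partial>M)"
  proof (rule nn_integral_graft[OF k])
    show "(\<lambda>f. ennreal ((real (Yc k f))\<^sup>2)) \<in> borel_measurable cfg_space"
      using measurable_compose[OF measurable_Ycfg, of "\<lambda>x. ennreal ((real x)\<^sup>2)" borel] by (simp add: comp_def)
    show "determined_by (past k) (\<lambda>f. ennreal ((real (Yc k f))\<^sup>2))"
      by (rule determined_by_comp[OF Ycfg_determined])
  qed
  also have "\<dots> \<le> (\<integral>\<^sup>+\<omega>. ennreal (rho * (real (Y (k - 1) \<omega>))\<^sup>2 + drift_const) \<partial>M)"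
  proof (rule nn_integral_mono)
    fix \<omega>
    let ?y = "Y (k - 1) \<omega>"
    let ?b = "\<alpha> * real ?y + \<mu> + real (outlier k)"
    have "(\<integral>\<^sup>+\<omega>'. ennreal ((real (Yc k (graft k (cfg \<omega>) (cfg \<omega>'))))\<^sup>2) \<partial>M)
        = (\<integral>\<^sup>+\<omega>'. ennreal ((innov k ?y \<omega>' + ?b)\<^sup>2) \<partial>M)"
      by (simp only: Yc_graft_innov[OF k])
    also have "\<dots> = ennreal (\<integral>\<omega>'. (innov k ?y \<omega>' + ?b)\<^sup>2 \<partial>M)"
      by (rule nn_integral_eq_integral[OF innov_shift_second_moment(1)[OF k]]) simp
    also have "\<dots> = ennreal (var_eps + real ?y * (\<alpha> * (1 - \<alpha>)) + ?b\<^sup>2)"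
      by (simp add: innov_shift_second_moment(2)[OF k])
    also have "\<dots> \<le> ennreal (rho * (real ?y)\<^sup>2 + drift_const)"
      using drift_inequality[of "real ?y" "real (outlier k)"] outlier_le[of k]
      by (intro ennreal_leI) (simp add: add.assoc)
    finally show "(\<integral>\<^sup>+\<omega>'. ennreal ((real (Yc k (graft k (cfg \<omega>) (cfg \<omega>'))))\<^sup>2) \<partial>M)
        \<le> ennreal (rho * (real ?y)\<^sup>2 + drift_const)" .
  qed
  finally show ?thesis .
qed

lemma second_moment_bound_ennreal: "(\<integral>\<^sup>+\<omega>. ennreal ((real (Y k \<omega>))\<^sup>2) \<partial>M) \<le> ennreal moment_bound"
proof (induction k)
  case 0
  have "(\<integral>\<^sup>+\<omega>. ennreal ((real (Y 0 \<omega>))\<^sup>2) \<partial>M) = ennreal (\<integral>\<omega>. (real (Y0 \<omega>))\<^sup>2 \<partial>M)"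
    by (simp add: cfg_Y0 nn_integral_eq_integral[OF Y0_sq])
  also have "\<dots> \<le> ennreal moment_bound" unfolding moment_bound_def by (intro ennreal_leI) simp
  finally show ?case .
next
  case (Suc k)
  have r: "0 \<le> rho" using rho_bounds by simp
  have "(\<integral>\<^sup>+\<omega>. ennreal ((real (Y (Suc k) \<omega>))\<^sup>2) \<partial>M)
      \<le> (\<integral>\<^sup>+\<omega>. ennreal (rho * (real (Y k \<omega>))\<^sup>2 + drift_const) \<partial>M)"
    using second_moment_step[of "Suc k"] by simp
  also have "\<dots> = ennreal rho * (\<integral>\<^sup>+\<omega>. ennreal ((real (Y k \<omega>))\<^sup>2) \<partial>M) + ennreal drift_const"
    using r drift_const_nonneg
    by (simp add: ennreal_plus ennreal_mult nn_integral_add nn_integral_cmult emeasure_space_1)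
  also have "\<dots> \<le> ennreal rho * ennreal moment_bound + ennreal drift_const"
    using Suc.IH by (intro add_mono mult_left_mono) auto
  also have "\<dots> \<le> ennreal moment_bound"
    using r drift_const_nonneg moment_bound_nonneg moment_bound_stable
    by (simp add: ennreal_plus[symmetric] ennreal_mult[symmetric] ennreal_leI del: ennreal_plus)
  finally show ?case .
qed

lemma Y_square_integrable: "integrable M (\<lambda>\<omega>. (real (Y k \<omega>))\<^sup>2)"
proof (rule integrableI_bounded)
  have "(\<integral>\<^sup>+\<omega>. ennreal (norm ((real (Y k \<omega>))\<^sup>2)) \<partial>M) \<le> ennreal moment_bound"
    using second_moment_bound_ennreal by simp
  then show "(\<integral>\<^sup>+\<omega>. ennreal (norm ((real (Y k \<omega>))\<^sup>2)) \<partial>M) < \<infinity>"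
    by (simp add: le_less_trans)
qed simp

lemma Y_second_moment_bound: "(\<integral>\<omega>. (real (Y k \<omega>))\<^sup>2 \<partial>M) \<le> moment_bound"
proof -
  have "ennreal (\<integral>\<omega>. (real (Y k \<omega>))\<^sup>2 \<partial>M) = (\<integral>\<^sup>+\<omega>. ennreal ((real (Y k \<omega>))\<^sup>2) \<partial>M)"
    by (rule nn_integral_eq_integral[OF Y_square_integrable, symmetric]) simp
  also have "\<dots> \<le> ennreal moment_bound" by (rule second_moment_bound_ennreal)
  finally show ?thesis using moment_bound_nonneg by (simp add: ennreal_le_iff)
qed

text \<open>The score increment of the CLS estimator at time k, (Y_k - \<alpha> Y_{k-1} - \<mu> - outlier) Y_{k-1},
  as a functional of the configuration; and the truncation indicator of the event
  Y_{k-1}^4 \<le> k^3, which makes second moments grow at most like k^(3/4) Y_{k-1}^2.\<close>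
definition score :: "nat \<Rightarrow> (inar_idx \<Rightarrow> nat) \<Rightarrow> real" where
  "score k f = ((\<Sum>l\<in>{1..Yc (k - 1) f}. real (f (IXi k l))) - \<alpha> * real (Yc (k - 1) f) + real (f (IEps k)) - \<mu>)
               * real (Yc (k - 1) f)"

definition trunc :: "nat \<Rightarrow> (inar_idx \<Rightarrow> nat) \<Rightarrow> real" where
  "trunc k f = (if (Yc (k - 1) f)^4 \<le> k^3 then 1 else 0)"

definition score_trunc :: "nat \<Rightarrow> (inar_idx \<Rightarrow> nat) \<Rightarrow> real" where
  "score_trunc k f = score k f * trunc k f"

lemma score_measurable: "score k \<in> borel_measurable cfg_space"
proof -
  have "(\<lambda>f. ((\<Sum>l\<in>{1..n}. real (f (IXi k l))) - \<alpha> * real n + real (f (IEps k)) - \<mu>) * real n)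
      \<in> borel_measurable cfg_space" for n
    by measurable
  from measurable_compose_countable'[OF this measurable_Ycfg] show ?thesis
    unfolding score_def by simp
qed

lemma trunc_measurable: "trunc k \<in> borel_measurable cfg_space"
  unfolding trunc_def
  using measurable_compose[OF measurable_Ycfg, of "\<lambda>n. if n^4 \<le> k^3 then 1 else 0::real" borel]
  by (simp add: comp_def)

lemma score_trunc_measurable: "score_trunc k \<in> borel_measurable cfg_space"
  unfolding score_trunc_def using score_measurable trunc_measurable by (simp add: borel_measurable_times)

lemma trunc_determined: "determined_by (past (k - 1)) (trunc k)"
  unfolding trunc_def by (rule determined_by_comp[OF Ycfg_determined])

lemma score_determined:
  assumes k: "k \<ge> 1" shows "determined_by (past k) (score k)"
proof (rule determined_byI)
  fix f g :: "inar_idx \<Rightarrow> nat" assume fg: "\<And>i. i \<in> past k \<Longrightarrow> f i = g i"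
  have "Yc (k - 1) f = Yc (k - 1) g"
    by (rule determined_byD[OF Ycfg_determined]) (use fg past_mono[of "k - 1" k] in auto)
  moreover have "f (IXi k l) = g (IXi k l)" if "l \<ge> 1" for l
    using fg[of "IXi k l"] that k by (simp add: past_def)
  moreover have "f (IEps k) = g (IEps k)"
    using fg[of "IEps k"] k by (simp add: past_def)
  ultimately show "score k f = score k g" unfolding score_def by simp
qed

lemma score_trunc_determined: "k \<ge> 1 \<Longrightarrow> determined_by (past k) (score_trunc k)"
  unfolding score_trunc_def
  by (intro determined_by_mult score_determined determined_by_past_mono[OF _ trunc_determined]) auto

lemma score_graft:
  assumes k: "k \<ge> 1"
  shows "score k (graft k f (cfg \<omega>')) = innov k (Yc (k - 1) f) \<omega>' * real (Yc (k - 1) f)"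
    and "trunc k (graft k f g) = trunc k f"
proof -
  have past: "Yc (k - 1) (graft k f h) = Yc (k - 1) f" for h
    by (rule determined_byD[OF Ycfg_determined]) (simp add: graft_past)
  show "score k (graft k f (cfg \<omega>')) = innov k (Yc (k - 1) f) \<omega>' * real (Yc (k - 1) f)"
    unfolding score_def innov_def past using k by (simp add: graft_xi graft_eps cfg_xi cfg_eps)
  show "trunc k (graft k f g) = trunc k f" unfolding trunc_def past ..
qed

lemma trunc_cases: "trunc k f = 0 \<or> trunc k f = 1"
  by (simp add: trunc_def)

lemma trunc_bound:
  assumes k: "k \<ge> 1" shows "real (Yc (k - 1) f) * trunc k f \<le> real k powr (3/4)"
proof (cases "(Yc (k - 1) f)^4 \<le> k^3")
  case True
  then have "real (Yc (k - 1) f) ^ 4 \<le> real k ^ 3"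
    by (simp only: of_nat_power[symmetric] of_nat_le_iff)
  then show ?thesis
    using True fourth_power_le_iff[of "real (Yc (k - 1) f)" "real k"] k by (simp add: trunc_def)
qed (simp add: trunc_def)

lemma score_trunc_conditional_second_moment:
  assumes k: "k \<ge> 1"
  shows "(\<integral>\<^sup>+\<omega>'. ennreal ((score_trunc k (graft k f (cfg \<omega>')))\<^sup>2) \<partial>M)
      \<le> ennreal ((var_eps + real k powr (3/4)) * (real (Yc (k - 1) f))\<^sup>2)"
proof -
  let ?y = "Yc (k - 1) f" and ?t = "trunc k f"
  have sq: "(score_trunc k (graft k f (cfg \<omega>')))\<^sup>2 = (innov k ?y \<omega>')\<^sup>2 * (real ?y * ?t)\<^sup>2" for \<omega>'
    unfolding score_trunc_def score_graft[OF k] by (simp add: power_mult_distrib)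
  have "(\<integral>\<^sup>+\<omega>'. ennreal ((score_trunc k (graft k f (cfg \<omega>')))\<^sup>2) \<partial>M)
      = ennreal ((var_eps + real ?y * (\<alpha> * (1 - \<alpha>))) * (real ?y * ?t)\<^sup>2)"
    unfolding sq using innov_second_moment[OF k, of ?y]
    by (subst nn_integral_eq_integral) simp_all
  also have "\<dots> \<le> ennreal ((var_eps + real k powr (3/4)) * (real ?y)\<^sup>2)"
  proof (rule ennreal_leI)
    have "real ?y * (\<alpha> * (1 - \<alpha>)) \<le> real ?y" using alpha by (intro mult_left_le mult_le_one) auto
    then show "(var_eps + real ?y * (\<alpha> * (1 - \<alpha>))) * (real ?y * ?t)\<^sup>2 \<le> (var_eps + real k powr (3/4)) * (real ?y)\<^sup>2"
    proof (cases "?t = 0")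
      case False
      then have "?t = 1" using trunc_cases[of k f] by simp
      then have "real ?y * (\<alpha> * (1 - \<alpha>)) \<le> real k powr (3/4)"
        using \<open>real ?y * (\<alpha> * (1 - \<alpha>)) \<le> real ?y\<close> trunc_bound[OF k, of f] by simp
      then show ?thesis using \<open>?t = 1\<close> by (simp add: mult_right_mono)
    qed (use var_eps_nonneg in simp)
  qed
  finally show ?thesis .
qed

lemma score_trunc_second_moment:
  assumes k: "k \<ge> 1"
  shows "integrable M (\<lambda>\<omega>. (score_trunc k (cfg \<omega>))\<^sup>2)"
    and "(\<integral>\<omega>. (score_trunc k (cfg \<omega>))\<^sup>2 \<partial>M) \<le> (var_eps + real k powr (3/4)) * moment_bound"
proof -
  have c: "0 \<le> var_eps + real k powr (3/4)" using var_eps_nonneg by simp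
  have "(\<integral>\<^sup>+\<omega>. ennreal ((score_trunc k (cfg \<omega>))\<^sup>2) \<partial>M) =
        (\<integral>\<^sup>+\<omega>. \<integral>\<^sup>+\<omega>'. ennreal ((score_trunc k (graft k (cfg \<omega>) (cfg \<omega>')))\<^sup>2) \<partial>M \<partial>M)"
  proof (rule nn_integral_graft[OF k])
    show "(\<lambda>f. ennreal ((score_trunc k f)\<^sup>2)) \<in> borel_measurable cfg_space"
      using score_trunc_measurable by measurable
    show "determined_by (past k) (\<lambda>f. ennreal ((score_trunc k f)\<^sup>2))"
      by (rule determined_by_comp[OF score_trunc_determined[OF k]])
  qed
  also have "\<dots> \<le> (\<integral>\<^sup>+\<omega>. ennreal (var_eps + real k powr (3/4)) * ennreal ((real (Y (k - 1) \<omega>))\<^sup>2) \<partial>M)"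
    using score_trunc_conditional_second_moment[OF k] c by (intro nn_integral_mono) (simp add: ennreal_mult)
  also have "\<dots> \<le> ennreal (var_eps + real k powr (3/4)) * ennreal moment_bound"
    by (simp add: nn_integral_cmult second_moment_bound_ennreal mult_left_mono)
  also have "\<dots> = ennreal ((var_eps + real k powr (3/4)) * moment_bound)"
    using c moment_bound_nonneg by (simp add: ennreal_mult)
  finally have bound: "(\<integral>\<^sup>+\<omega>. ennreal ((score_trunc k (cfg \<omega>))\<^sup>2) \<partial>M)
      \<le> ennreal ((var_eps + real k powr (3/4)) * moment_bound)" .
  have meas: "(\<lambda>\<omega>. (score_trunc k (cfg \<omega>))\<^sup>2) \<in> borel_measurable M"
    using cfg_functional_measurable[OF score_trunc_measurable] by simp
  show int: "integrable M (\<lambda>\<omega>. (score_trunc k (cfg \<omega>))\<^sup>2)"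
    using bound meas by (intro integrableI_bounded) (simp_all add: le_less_trans)
  have "ennreal (\<integral>\<omega>. (score_trunc k (cfg \<omega>))\<^sup>2 \<partial>M) \<le> ennreal ((var_eps + real k powr (3/4)) * moment_bound)"
    using bound by (subst nn_integral_eq_integral[OF int, symmetric]) simp_all
  then show "(\<integral>\<omega>. (score_trunc k (cfg \<omega>))\<^sup>2 \<partial>M) \<le> (var_eps + real k powr (3/4)) * moment_bound"
    using c moment_bound_nonneg by (simp add: ennreal_le_iff)
qed

lemma score_trunc_martingale_diff: "martingale_diff score_trunc"
proof (rule martingale_diffI)
  fix k :: nat and \<omega> assume k: "k \<ge> 1"
  show "score_trunc k \<in> borel_measurable cfg_space" by (rule score_trunc_measurable)
  show "determined_by (past k) (score_trunc k)" by (rule score_trunc_determined[OF k])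
  show "integrable M (\<lambda>\<omega>. (score_trunc k (cfg \<omega>))\<^sup>2)" by (rule score_trunc_second_moment(1)[OF k])
  show "(\<integral>\<omega>'. score_trunc k (graft k (cfg \<omega>) (cfg \<omega>')) \<partial>M) = 0"
    unfolding score_trunc_def score_graft[OF k] using innov_mean[OF k] by (simp add: mult.assoc)
qed

lemma score_trunc_slln: "AE \<omega> in M. (\<lambda>n. (\<Sum>k\<in>{1..n}. score_trunc k (cfg \<omega>)) / real n) \<longlonglongrightarrow> 0"
proof (rule martingale_diff_slln[OF score_trunc_martingale_diff])
  let ?b = "\<lambda>m::nat. moment_bound * (real (2^(m+1)) * (var_eps + real (2^(m+1)) powr (3/4)) / 4^m)"
  show "summable (\<lambda>m. (\<Sum>k\<in>{1..2^(m+1)}. \<integral>\<omega>. (score_trunc k (cfg \<omega>))\<^sup>2 \<partial>M) / 4^m)"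
  proof (rule summable_comparison_test'[of ?b 0])
    show "summable ?b" by (intro summable_mult summable_dyadic_moment_bound)
    fix m :: nat
    let ?N = "2^(m+1) :: nat"
    have "(\<Sum>k\<in>{1..?N}. \<integral>\<omega>. (score_trunc k (cfg \<omega>))\<^sup>2 \<partial>M) \<le> (\<Sum>k\<in>{1..?N}. (var_eps + real ?N powr (3/4)) * moment_bound)"
    proof (rule sum_mono)
      fix k assume k: "k \<in> {1..?N}"
      have "(\<integral>\<omega>. (score_trunc k (cfg \<omega>))\<^sup>2 \<partial>M) \<le> (var_eps + real k powr (3/4)) * moment_bound"
        using k score_trunc_second_moment(2)[of k] by simp
      also have "\<dots> \<le> (var_eps + real ?N powr (3/4)) * moment_bound"
        using k moment_bound_nonneg
        by (intro mult_right_mono add_left_mono powr_mono2) (auto simp del: of_nat_power)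
      finally show "(\<integral>\<omega>. (score_trunc k (cfg \<omega>))\<^sup>2 \<partial>M) \<le> (var_eps + real ?N powr (3/4)) * moment_bound" .
    qed
    moreover have "0 \<le> (\<Sum>k\<in>{1..?N}. \<integral>\<omega>. (score_trunc k (cfg \<omega>))\<^sup>2 \<partial>M)"
      by (intro sum_nonneg integral_nonneg_AE) auto
    ultimately show "norm ((\<Sum>k\<in>{1..?N}. \<integral>\<omega>. (score_trunc k (cfg \<omega>))\<^sup>2 \<partial>M) / 4^m) \<le> ?b m"
      by (simp add: divide_right_mono field_simps del: of_nat_power)
  qed
qed

text \<open>The truncation fails with probability at most C k^(-3/2), by Markov's inequality
  applied to Y_{k-1}^2 \<ge> k^(3/2) and the L^2 bound.\<close>
lemma truncation_failure_prob:
  assumes k: "k \<ge> 1"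
  shows "prob {\<omega>\<in>space M. \<not> (Y (k - 1) \<omega>)^4 \<le> k^3} \<le> moment_bound * real k powr (-(3/2))"
proof -
  define A where "A = {\<omega>\<in>space M. \<not> (Y (k - 1) \<omega>)^4 \<le> k^3}"
  have kp: "real k > 0" using k by simp
  let ?c = "real k powr (3/2)"
  have "A \<subseteq> {\<omega>\<in>space M. (real (Y (k - 1) \<omega>))\<^sup>2 \<ge> ?c}"
  proof safe
    fix \<omega> assume "\<omega> \<in> A"
    then have "\<not> real (Y (k - 1) \<omega>) ^ 4 \<le> real k ^ 3" unfolding A_def
      by (simp only: mem_Collect_eq of_nat_power[symmetric] of_nat_le_iff) simp
    then have "\<not> real (Y (k - 1) \<omega>) \<le> real k powr (3/4)"
      using fourth_power_le_iff[of "real (Y (k - 1) \<omega>)" "real k"] kp by simp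
    then have "(real k powr (3/4))\<^sup>2 \<le> (real (Y (k - 1) \<omega>))\<^sup>2"
      by (intro power_mono) auto
    then show "?c \<le> (real (Y (k - 1) \<omega>))\<^sup>2"
      using kp by (simp add: powr_power)
  qed (simp add: A_def)
  then have "prob A \<le> prob {\<omega>\<in>space M. (real (Y (k - 1) \<omega>))\<^sup>2 \<ge> ?c}"
    by (intro finite_measure_mono) measurable
  also have "\<dots> \<le> (\<integral>\<omega>. (real (Y (k - 1) \<omega>))\<^sup>2 \<partial>M) / ?c"
    by (rule integral_Markov_inequality_measure[OF Y_square_integrable, of "space M"]) (use kp in auto)
  also have "\<dots> \<le> moment_bound / ?c" using Y_second_moment_bound kp by (intro divide_right_mono) auto
  also have "\<dots> = moment_bound * real k powr (-(3/2))" by (simp only: divide_inverse powr_minus)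
  finally show ?thesis unfolding A_def .
qed

lemma trunc_eventually_one: "AE \<omega> in M. eventually (\<lambda>k. trunc k (cfg \<omega>) = 1) sequentially"
proof -
  define A where "A k = {\<omega>\<in>space M. \<not> (Y (k - 1) \<omega>)^4 \<le> k^3}" for k
  have Am[measurable]: "A k \<in> sets M" for k unfolding A_def by measurable
  have PA: "prob (A k) \<le> moment_bound * real k powr (-(3/2))" if "k \<ge> 1" for k
    unfolding A_def using that by (rule truncation_failure_prob)
  have summ: "summable (\<lambda>k. prob (A k))"
  proof (rule summable_comparison_test'[of "\<lambda>k. moment_bound * real k powr (-(3/2))" 1])
    show "summable (\<lambda>k. moment_bound * real k powr (-(3/2)))"
      by (intro summable_mult) (simp add: summable_real_powr_iff)
    fix k :: nat assume "1 \<le> k"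
    then show "norm (prob (A k)) \<le> moment_bound * real k powr (-(3/2))" using PA by simp
  qed
  have "AE \<omega> in M. eventually (\<lambda>k. \<omega> \<in> space M - A k) sequentially"
    by (rule borel_cantelli_AE1[OF Am _ summ]) (simp add: less_top[symmetric])
  then show ?thesis
  proof (rule AE_mp, intro AE_I2 impI)
    fix \<omega> assume "eventually (\<lambda>k. \<omega> \<in> space M - A k) sequentially"
    then show "eventually (\<lambda>k. trunc k (cfg \<omega>) = 1) sequentially"
      by (rule eventually_mono) (auto simp: A_def trunc_def)
  qed
qed

definition p_nz :: real where
  "p_nz = prob {\<omega>\<in>space M. eps 1 \<omega> \<noteq> 0}"

definition nz_centred :: "nat \<Rightarrow> (inar_idx \<Rightarrow> nat) \<Rightarrow> real" where
  "nz_centred k f = (if f (IEps k) \<noteq> 0 then 1 else 0) - p_nz"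

lemma p_nz_bounds: "p_nz > 0" "p_nz \<le> 1"
  unfolding p_nz_def using eps_nz by auto

lemma nz_centred_abs_le: "\<bar>nz_centred k f\<bar> \<le> 1"
  unfolding nz_centred_def using p_nz_bounds by auto

lemma nz_centred_martingale_diff: "martingale_diff nz_centred"
proof (rule martingale_diffI)
  fix k :: nat and \<omega> assume k: "k \<ge> 1"
  show m: "nz_centred k \<in> borel_measurable cfg_space"
  proof -
    have "nz_centred k = (\<lambda>x. (if x \<noteq> 0 then 1 else 0) - p_nz) \<circ> (\<lambda>f. f (IEps k))"
      by (auto simp: fun_eq_iff nz_centred_def)
    then show ?thesis by (simp add: measurable_comp[OF measurable_coordinate])
  qed
  show "determined_by (past k) (nz_centred k)"
    unfolding nz_centred_def determined_by_def using k by (simp add: past_def)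
  show "integrable M (\<lambda>\<omega>. (nz_centred k (cfg \<omega>))\<^sup>2)"
  proof (rule Bochner_Integration.integrable_bound[of _ "\<lambda>_. 1::real"])
    show "AE \<omega> in M. norm ((nz_centred k (cfg \<omega>))\<^sup>2) \<le> norm (1::real)"
      using nz_centred_abs_le[of k] by (auto simp: abs_square_le_1)
  qed (use cfg_functional_measurable[OF m] in auto)
  have "graft k (cfg \<omega>) (cfg \<omega>') (IEps k) = eps k \<omega>'" for \<omega>'
    using k by (simp add: graft_eps cfg_eps)
  then have "(\<integral>\<omega>'. nz_centred k (graft k (cfg \<omega>) (cfg \<omega>')) \<partial>M)
      = (\<integral>\<omega>'. (\<lambda>x. (if x \<noteq> 0 then 1 else 0) - p_nz) (eps k \<omega>') \<partial>M)"
    unfolding nz_centred_def by simp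
  also have "\<dots> = (\<integral>\<omega>'. (\<lambda>x. (if x \<noteq> 0 then 1 else 0) - p_nz) (eps 1 \<omega>') \<partial>M)"
    by (rule eps_same_law(2)[OF k])
  also have "\<dots> = (\<integral>\<omega>'. indicator {\<omega>\<in>space M. eps 1 \<omega> \<noteq> 0} \<omega>' - p_nz \<partial>M)"
    by (rule Bochner_Integration.integral_cong) (auto simp: indicator_def)
  also have "\<dots> = 0"
  proof -
    have [measurable]: "eps 1 \<in> measurable M (count_space UNIV)" by (rule eps_measurable) simp
    have "{\<omega>\<in>space M. eps 1 \<omega> \<noteq> 0} \<in> sets M" by measurable
    then show ?thesis unfolding p_nz_def
      by (subst Bochner_Integration.integral_diff) (auto simp: prob_space less_top[symmetric])
  qed
  finally show "(\<integral>\<omega>'. nz_centred k (graft k (cfg \<omega>) (cfg \<omega>')) \<partial>M) = 0" .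
qed

lemma nz_centred_slln: "AE \<omega> in M. (\<lambda>n. (\<Sum>k\<in>{1..n}. nz_centred k (cfg \<omega>)) / real n) \<longlonglongrightarrow> 0"
proof (rule martingale_diff_slln[OF nz_centred_martingale_diff])
  show "summable (\<lambda>m. (\<Sum>k\<in>{1..2^(m+1)}. \<integral>\<omega>. (nz_centred k (cfg \<omega>))\<^sup>2 \<partial>M) / 4^m)"
  proof (rule summable_comparison_test'[OF summable_mult[OF summable_geometric[of "1/2::real"], of 2]])
    fix m :: nat
    let ?N = "2^(m+1) :: nat"
    have "(\<integral>\<omega>. (nz_centred k (cfg \<omega>))\<^sup>2 \<partial>M) \<le> 1" for k
    proof -
      have "(\<integral>\<omega>. (nz_centred k (cfg \<omega>))\<^sup>2 \<partial>M) \<le> (\<integral>\<omega>. 1 \<partial>M)"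
        using nz_centred_abs_le by (intro integral_mono') (auto simp: abs_square_le_1)
      then show ?thesis by (simp add: prob_space)
    qed
    then have le: "(\<Sum>k\<in>{1..?N}. \<integral>\<omega>. (nz_centred k (cfg \<omega>))\<^sup>2 \<partial>M) \<le> 2 * 2^m"
      using sum_mono[of "{1..?N}" "\<lambda>k. \<integral>\<omega>. (nz_centred k (cfg \<omega>))\<^sup>2 \<partial>M" "\<lambda>_. 1"] by simp
    have nn: "0 \<le> (\<Sum>k\<in>{1..?N}. \<integral>\<omega>. (nz_centred k (cfg \<omega>))\<^sup>2 \<partial>M)"
      by (intro sum_nonneg integral_nonneg_AE) auto
    have f4: "(4::real)^m = 2^m * 2^m" by (simp flip: power_mult_distrib)
    show "norm ((\<Sum>k\<in>{1..?N}. \<integral>\<omega>. (nz_centred k (cfg \<omega>))\<^sup>2 \<partial>M) / 4^m) \<le> 2 * (1/2)^m"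
      using le nn by (simp add: f4 field_simps power_one_over)
  qed simp
qed

definition energy :: "nat \<Rightarrow> 'a \<Rightarrow> real" where
  "energy n \<omega> = (\<Sum>k\<in>{1..n} - {s1, s2}. (real (Y (k - 1) \<omega>))\<^sup>2)"

text \<open>After both outliers the energy is positive: the outlier makes Y_s \<ge> 1 at the
  outlier time s, and at least one of s1 + 1, s2 + 1 is a non-outlier time.\<close>
lemma energy_pos:
  assumes n: "n > max s1 s2"
  shows "energy n \<omega> > 0"
proof -
  define s where "s = (if Suc s1 \<noteq> s2 then s1 else s2)"
  have s_in: "Suc s \<in> {1..n} - {s1, s2}" unfolding s_def using n s12 by auto
  have "Y s \<omega> \<ge> 1"
    using Y_ge_eps_outlier[of s \<omega>] outlier_at_outlier_times s1 s2 unfolding s_def by auto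
  then have "0 < (real (Y (Suc s - 1) \<omega>))\<^sup>2" by simp
  also have "\<dots> \<le> energy n \<omega>"
    unfolding energy_def by (rule member_le_sum[OF s_in]) auto
  finally show ?thesis .
qed

text \<open>Every nonzero innovation contributes at least 1 to the energy.\<close>
lemma sum_sq_ge_nonzero_count:
  "(\<Sum>k\<in>{1..Suc n}. (real (Y (k - 1) \<omega>))\<^sup>2) \<ge> (\<Sum>k\<in>{1..n}. (if eps k \<omega> \<noteq> 0 then 1 else 0::real))"
proof (induction n)
  case (Suc n)
  have "(if eps (Suc n) \<omega> \<noteq> 0 then 1 else 0::real) \<le> (real (Y (Suc n) \<omega>))\<^sup>2"
  proof (cases "eps (Suc n) \<omega> = 0")
    case False
    then have "real (Y (Suc n) \<omega>) \<ge> 1" using Y_ge_eps_outlier[of "Suc n" \<omega>] by linarith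
    then have "1 \<le> (real (Y (Suc n) \<omega>))\<^sup>2" by (metis one_le_power)
    then show ?thesis using False by simp
  qed simp
  then show ?case using Suc.IH by (simp add: sum.cl_ivl_Suc[of _ 1 "Suc n"])
qed simp

lemma energy_ge_nonzero_count:
  assumes n: "n \<ge> max s1 s2"
  shows "energy n \<omega> \<ge> (\<Sum>k\<in>{1..n}. (if eps k \<omega> \<noteq> 0 then 1 else 0::real)) - 1
      - ((real (Y (s1 - 1) \<omega>))\<^sup>2 + (real (Y (s2 - 1) \<omega>))\<^sup>2)"
proof -
  obtain n' where n': "n = Suc n'" using n s1 by (cases n) auto
  have "{s1, s2} \<subseteq> {1..n}" using n s1 s2 by auto
  then have "energy n \<omega> = (\<Sum>k\<in>{1..n}. (real (Y (k - 1) \<omega>))\<^sup>2) - (\<Sum>k\<in>{s1, s2}. (real (Y (k - 1) \<omega>))\<^sup>2)"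
    unfolding energy_def by (intro sum_diff) simp_all
  moreover have "(\<Sum>k\<in>{1..n}. (if eps k \<omega> \<noteq> 0 then 1 else 0::real))
      \<le> (\<Sum>k\<in>{1..n'}. (if eps k \<omega> \<noteq> 0 then 1 else 0::real)) + 1"
    unfolding n' by (simp add: sum.cl_ivl_Suc)
  ultimately show ?thesis
    using sum_sq_ge_nonzero_count[where n=n' and \<omega>=\<omega>] s12 unfolding n' by simp
qed

lemma energy_grows_linearly:
  assumes nz: "(\<lambda>n. (\<Sum>k\<in>{1..n}. nz_centred k (cfg \<omega>)) / real n) \<longlonglongrightarrow> 0"
  shows "eventually (\<lambda>n. (p_nz / 2) * real n \<le> energy n \<omega>) sequentially"
proof -
  define N where "N n = (\<Sum>k\<in>{1..n}. (if eps k \<omega> \<noteq> 0 then 1 else 0::real))" for n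
  define c where "c = 1 + ((real (Y (s1 - 1) \<omega>))\<^sup>2 + (real (Y (s2 - 1) \<omega>))\<^sup>2)"
  have "(\<lambda>n. (\<Sum>k\<in>{1..n}. nz_centred k (cfg \<omega>)) / real n) \<longlonglongrightarrow> 0" by (rule nz)
  moreover have "eventually (\<lambda>n. (\<Sum>k\<in>{1..n}. nz_centred k (cfg \<omega>)) / real n = N n / real n - p_nz) sequentially"
    using eventually_ge_at_top[of 1]
  proof eventually_elim
    case (elim n)
    have "(\<Sum>k\<in>{1..n}. nz_centred k (cfg \<omega>)) = N n - real n * p_nz"
      unfolding nz_centred_def N_def by (simp add: sum_subtractf cfg_eps)
    then show ?case using elim by (simp add: field_simps)
  qed
  ultimately have "(\<lambda>n. N n / real n - p_nz) \<longlonglongrightarrow> 0" by (simp add: Lim_transform_eventually)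
  then have "(\<lambda>n. (N n / real n - p_nz) - c / real n) \<longlonglongrightarrow> 0 - 0"
    by (intro tendsto_diff tendsto_divide_0[OF tendsto_const]
        filterlim_at_top_imp_at_infinity filterlim_real_sequentially)
  then have "eventually (\<lambda>n. (N n / real n - p_nz) - c / real n > - p_nz / 2) sequentially"
    using p_nz_bounds by (intro order_tendstoD(1)) auto
  then show ?thesis using eventually_ge_at_top[of "max s1 s2 + 1"]
  proof eventually_elim
    case (elim n)
    then have np: "real n > 0" by simp
    have "p_nz / 2 * real n < (N n / real n - c / real n) * real n"
      using elim np by (intro mult_strict_right_mono) linarith+
    also have "\<dots> = N n - c" using np by (simp add: field_simps)
    also have "\<dots> \<le> energy n \<omega>"
    proof -
      have "n \<ge> max s1 s2" using elim by linarith
      from energy_ge_nonzero_count[OF this, where \<omega>=\<omega>] show ?thesis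
        unfolding N_def c_def by linarith
    qed
    finally show ?case by simp
  qed
qed

lemma score_cfg:
  assumes k: "k \<ge> 1" "k \<noteq> s1" "k \<noteq> s2"
  shows "score k (cfg \<omega>) = (real (Y k \<omega>) - \<mu>) * real (Y (k - 1) \<omega>) - \<alpha> * (real (Y (k - 1) \<omega>))\<^sup>2"
proof -
  obtain k' where k': "k = Suc k'" using k by (cases k) auto
  have "outlier k = 0" unfolding outlier_def using k by auto
  then have "real (Y k \<omega>) = (\<Sum>l\<in>{1..Y (k - 1) \<omega>}. real (cfg \<omega> (IXi k l))) + real (cfg \<omega> (IEps k))"
    unfolding k' Yc_Suc by simp
  then show ?thesis unfolding score_def by (simp add: power2_eq_square algebra_simps)
qed

lemma alpha_tilde_error:
  assumes n: "n > max s1 s2"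
  shows "inar_alpha_tilde s1 s2 \<mu> n (\<lambda>k. real (Y k \<omega>))
      = \<alpha> + ((\<Sum>k\<in>{1..n}. score k (cfg \<omega>)) - score s1 (cfg \<omega>) - score s2 (cfg \<omega>)) / energy n \<omega>"
proof -
  let ?K = "{1..n} - {s1, s2}"
  have sub: "{s1, s2} \<subseteq> {1..n}" using n s1 s2 by auto
  have "(\<Sum>k\<in>?K. score k (cfg \<omega>)) = (\<Sum>k\<in>{1..n}. score k (cfg \<omega>)) - score s1 (cfg \<omega>) - score s2 (cfg \<omega>)"
    using sum_diff[OF _ sub, of "\<lambda>k. score k (cfg \<omega>)"] s12 by simp
  moreover have "(\<Sum>k\<in>?K. (real (Y k \<omega>) - \<mu>) * real (Y (k - 1) \<omega>))
      = (\<Sum>k\<in>?K. score k (cfg \<omega>)) + \<alpha> * energy n \<omega>"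
    unfolding energy_def sum_distrib_left sum.distrib[symmetric]
    by (rule sum.cong[OF refl]) (auto simp: score_cfg)
  ultimately show ?thesis
    using energy_pos[OF n, of \<omega>] unfolding inar_alpha_tilde_def energy_def[symmetric]
    by (simp add: field_simps)
qed

lemma alpha_tilde_consistent:
  assumes score: "(\<lambda>n. (\<Sum>k\<in>{1..n}. score_trunc k (cfg \<omega>)) / real n) \<longlonglongrightarrow> 0"
    and trunc: "eventually (\<lambda>k. trunc k (cfg \<omega>) = 1) sequentially"
    and nz: "(\<lambda>n. (\<Sum>k\<in>{1..n}. nz_centred k (cfg \<omega>)) / real n) \<longlonglongrightarrow> 0"
  shows "(\<lambda>n. inar_alpha_tilde s1 s2 \<mu> n (\<lambda>k. real (Y k \<omega>))) \<longlonglongrightarrow> \<alpha>"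
proof -
  define g where "g n = (\<Sum>k\<in>{1..n}. score k (cfg \<omega>)) - score s1 (cfg \<omega>) - score s2 (cfg \<omega>)" for n
  have "(\<lambda>n. (\<Sum>k\<in>{1..n}. score k (cfg \<omega>)) / real n) \<longlonglongrightarrow> 0"
    by (rule average_eventually_eq[OF score]) (use trunc in \<open>auto elim!: eventually_mono simp: score_trunc_def\<close>)
  then have "(\<lambda>n. (\<Sum>k\<in>{1..n}. score k (cfg \<omega>)) / real n - (score s1 (cfg \<omega>) + score s2 (cfg \<omega>)) / real n) \<longlonglongrightarrow> 0 - 0"
    by (intro tendsto_diff tendsto_divide_0[OF tendsto_const]
        filterlim_at_top_imp_at_infinity filterlim_real_sequentially)
  moreover have "(\<Sum>k\<in>{1..n}. score k (cfg \<omega>)) / real n - (score s1 (cfg \<omega>) + score s2 (cfg \<omega>)) / real n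
      = g n / real n" for n
    unfolding g_def by (simp add: diff_divide_distrib add_divide_distrib)
  ultimately have "(\<lambda>n. g n / real n) \<longlonglongrightarrow> 0" by simp
  then have "(\<lambda>n. g n / energy n \<omega>) \<longlonglongrightarrow> 0"
    by (rule ratio_tendsto_zero[OF _ energy_grows_linearly[OF nz]]) (use p_nz_bounds in simp)
  then have "(\<lambda>n. \<alpha> + g n / energy n \<omega>) \<longlonglongrightarrow> \<alpha> + 0"
    by (intro tendsto_add tendsto_const)
  moreover have "eventually (\<lambda>n. \<alpha> + g n / energy n \<omega> = inar_alpha_tilde s1 s2 \<mu> n (\<lambda>k. real (Y k \<omega>))) sequentially"
    using eventually_gt_at_top[of "max s1 s2"] by eventually_elim (simp add: alpha_tilde_error g_def)
  ultimately show ?thesis by (simp add: Lim_transform_eventually)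
qed

lemma cls_minimizer_eventually:
  "\<exists>n0. \<forall>n\<ge>n0.
      (let y = (\<lambda>k. real (inar_Y Y0 eps xi s1 s2 \<theta>1 \<theta>2 k \<omega>));
           Q = (\<lambda>(a, t1, t2). inar_Q s1 s2 \<mu> n y a t1 t2);
           p = (inar_alpha_tilde s1 s2 \<mu> n y, inar_theta_tilde s1 s2 \<mu> n y s1, inar_theta_tilde s1 s2 \<mu> n y s2)
       in (\<forall>q. Q p \<le> Q q) \<and> (\<forall>q. (\<forall>r. Q q \<le> Q r) \<longrightarrow> q = p))"
proof (intro exI allI impI)
  fix n assume "n \<ge> Suc (max s1 s2)"
  then have "n > max s1 s2" by linarith
  then have "energy n \<omega> > 0" by (rule energy_pos)
  from cls_unique_minimizer[OF this[unfolded energy_def], of \<mu>, unfolded Let_def]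
  show "let y = (\<lambda>k. real (inar_Y Y0 eps xi s1 s2 \<theta>1 \<theta>2 k \<omega>));
           Q = (\<lambda>(a, t1, t2). inar_Q s1 s2 \<mu> n y a t1 t2);
           p = (inar_alpha_tilde s1 s2 \<mu> n y, inar_theta_tilde s1 s2 \<mu> n y s1, inar_theta_tilde s1 s2 \<mu> n y s2)
       in (\<forall>q. Q p \<le> Q q) \<and> (\<forall>q. (\<forall>r. Q q \<le> Q r) \<longrightarrow> q = p)"
    unfolding Let_def inar_Y_eq .
qed

lemma cls_strongly_consistent:
  "AE \<omega> in M.
     let y = (\<lambda>k. real (inar_Y Y0 eps xi s1 s2 \<theta>1 \<theta>2 k \<omega>)) in
     (\<lambda>n. inar_alpha_tilde s1 s2 \<mu> n y) \<longlonglongrightarrow> \<alpha>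
     \<and> (\<lambda>n. inar_theta_tilde s1 s2 \<mu> n y s1) \<longlonglongrightarrow> y s1 - \<alpha> * y (s1 - 1) - \<mu>
     \<and> (\<lambda>n. inar_theta_tilde s1 s2 \<mu> n y s2) \<longlonglongrightarrow> y s2 - \<alpha> * y (s2 - 1) - \<mu>"
  using score_trunc_slln trunc_eventually_one nz_centred_slln
proof eventually_elim
  case (elim \<omega>)
  have alpha: "(\<lambda>n. inar_alpha_tilde s1 s2 \<mu> n (\<lambda>k. real (Y k \<omega>))) \<longlonglongrightarrow> \<alpha>"
    using elim by (intro alpha_tilde_consistent)
  have "(\<lambda>n. inar_theta_tilde s1 s2 \<mu> n (\<lambda>k. real (Y k \<omega>)) s)
      \<longlonglongrightarrow> real (Y s \<omega>) - \<alpha> * real (Y (s - 1) \<omega>) - \<mu>" for s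
    unfolding inar_theta_tilde_def by (intro tendsto_intros alpha)
  then show ?case unfolding inar_Y_eq Let_def using alpha by simp
qed

end

theorem theorem4p4p1:
  fixes M :: "'a measure"
    and Y0 :: "'a \<Rightarrow> nat" and eps :: "nat \<Rightarrow> 'a \<Rightarrow> nat" and xi :: "nat \<Rightarrow> nat \<Rightarrow> 'a \<Rightarrow> nat"
    and \<alpha> :: real and \<mu> :: real and s1 s2 \<theta>1 \<theta>2 :: nat
  assumes "prob_space M"
    and "\<alpha> \<in> {0<..<1}"
    and "s1 \<ge> 1" and "s2 \<ge> 1" and "s1 \<noteq> s2" and "\<theta>1 \<ge> 1" and "\<theta>2 \<ge> 1"
    and indep: "prob_space.indep_vars M (\<lambda>_. count_space UNIV) (inar_family Y0 eps xi) inar_index_set"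
    and eps_ident: "\<And>k. k \<ge> 1 \<Longrightarrow> distr M (count_space UNIV) (eps k) = distr M (count_space UNIV) (eps 1)"
    and eps_sq: "integrable M (\<lambda>\<omega>. (real (eps 1 \<omega>))\<^sup>2)"
    and eps_nz: "measure M {\<omega> \<in> space M. eps 1 \<omega> \<noteq> 0} > 0"
    and mu_def: "\<mu> = integral\<^sup>L M (\<lambda>\<omega>. real (eps 1 \<omega>))"
    and xi_bern: "\<And>k j. k \<ge> 1 \<Longrightarrow> j \<ge> 1 \<Longrightarrow>
        distr M (count_space UNIV) (xi k j) = measure_pmf (map_pmf (\<lambda>b. if b then 1 else 0) (bernoulli_pmf \<alpha>))"
    and Y0_sq: "integrable M (\<lambda>\<omega>. (real (Y0 \<omega>))\<^sup>2)"
  shows "(AE \<omega> in M. \<exists>n0. \<forall>n\<ge>n0.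
            (let y = (\<lambda>k. real (inar_Y Y0 eps xi s1 s2 \<theta>1 \<theta>2 k \<omega>));
                 Q = (\<lambda>(a, t1, t2). inar_Q s1 s2 \<mu> n y a t1 t2);
                 p = (inar_alpha_tilde s1 s2 \<mu> n y, inar_theta_tilde s1 s2 \<mu> n y s1,
                      inar_theta_tilde s1 s2 \<mu> n y s2)
             in (\<forall>q. Q p \<le> Q q) \<and> (\<forall>q. (\<forall>r. Q q \<le> Q r) \<longrightarrow> q = p)))
       \<and> (AE \<omega> in M.
            let y = (\<lambda>k. real (inar_Y Y0 eps xi s1 s2 \<theta>1 \<theta>2 k \<omega>)) in
            (\<lambda>n. inar_alpha_tilde s1 s2 \<mu> n y) \<longlonglongrightarrow> \<alpha>
          \<and> (\<lambda>n. inar_theta_tilde s1 s2 \<mu> n y s1) \<longlonglongrightarrow> y s1 - \<alpha> * y (s1 - 1) - \<mu>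
          \<and> (\<lambda>n. inar_theta_tilde s1 s2 \<mu> n y s2) \<longlonglongrightarrow> y s2 - \<alpha> * y (s2 - 1) - \<mu>)"
proof -
  interpret inar_process M Y0 eps xi \<alpha> \<mu> s1 s2 \<theta>1 \<theta>2
    by (intro inar_process.intro inar_process_axioms.intro; (fact assms)?)
  from AE_I2[OF cls_minimizer_eventually] cls_strongly_consistent show ?thesis ..
qed

end
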